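(* Let $0\le\delta\le 0.011$ and let $\mathcal{I}$ be a $\delta$-ONI instance with $n$ agents such that $|N^1_1|\le n\left(\frac14-\delta\right)/\left(\frac14+\frac{\delta}{3}\right)$. Then Algorithm $\mathtt{approxMMS1}(\mathcal{I},\delta)$ (for every resolution of its arbitrary choices) returns a $\left(\frac34+\delta\right)$-MMS allocation of $\mathcal{I}$.
   Context: An instance has agents $N=[n]$, goods $M$, additive valuations $v_i:2^M\to\mathbb{R}_{\ge0}$; $\mathrm{MMS}^d_v(S)$ is the max over partitions of $S$ into $d$ bundles of the minimum bundle value, $\mathrm{MMS}_i=\mathrm{MMS}^n_{v_i}(M)$; an allocation (disjoint bundles $A_i$) is $\beta$-MMS if $v_i(A_i)\ge\beta\mathrm{MMS}_i$ for all $i$. Ordered: $M=[m]$ and $v_i(1)\ge\dots\ge v_i(m)$ for all $i$. Normalized: every agent $i$ has an MMS partition all of whose $n$ bundles have value exactly $1$ to $i$ (so $\mathrm{MMS}_i=1$). For an ordered instance with $n$ agents and threshold $\alpha$, the instance is $\alpha$-irreducible if for every agent $i$: $v_i(1)<\alpha$, $v_i(\{2n-1,2n,2n+1\})<\alpha$, $v_i(\{3n-2,3n-1,3n,3n+1\})<\alpha$ and $v_i(\{1,2n+1\})<\alpha$. It is $\delta$-ONI if ordered, normalized and $(3/4+\delta)$-irreducible. Goods with index larger than $m$, when referred to, are dummy goods of value $0$. Let $B_k=\{k,2n-k+1\}$ for $k\in[n]$; $N^1=\{i: v_i(B_k)\le1\text{ for all }k\in[n]\}$, $N^2=N\setminus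 N^1$, $N^1_1=\{i\in N^1: v_i(2n+1)\ge\frac14-5\delta\}$, $N^1_2=N^1\setminus N^1_1$ (computed on the input instance and fixed). Algorithm $\mathtt{approxMMS1}(\mathcal{I},\delta)$: let $\alpha=3/4+\delta$ and start with bags $B_1,\dots,B_n$, all agents and bags unassigned. Phase 1: while some unassigned agent $i$ and unassigned bag $B$ satisfy $v_i(B)\ge\alpha$, assign such a bag $B$ to an agent $i$ with $v_i(B)\ge\alpha$, choosing an agent of $N^1_1$ whenever one qualifies. Phase 2: process the remaining bags one by one; for the current bag $B$, while no unassigned agent values $B$ at least $\alpha$, add to $B$ an arbitrary not-yet-used good outside $[2n]$; then assign $B$ to an unassigned agent $i$ with $v_i(B)\ge\alpha$, choosing an agent of $N^1_1$ whenever one qualifies. The output gives each agent the bag assigned to it. *)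

theory Defs
  imports Complex_Main
begin

text \<open>Agents are 1..n, goods are 1..m. A valuation profile is v :: nat => nat => real,
  v i g = value of good g to agent i. Indices outside 1..m are dummy goods of value 0.\<close>

definition val :: "nat \<Rightarrow> (nat \<Rightarrow> nat \<Rightarrow> real) \<Rightarrow> nat \<Rightarrow> nat set \<Rightarrow> real" where
  "val m v i S = (\<Sum>g\<in>S \<inter> {1..m}. v i g)"

definition is_partition :: "nat \<Rightarrow> nat set \<Rightarrow> (nat \<Rightarrow> nat set) \<Rightarrow> bool" where
  "is_partition d S P \<longleftrightarrow> (\<Union>j\<in>{1..d}. P j) = S \<and>
     (\<forall>j\<in>{1..d}. \<forall>j'\<in>{1..d}. j \<noteq> j' \<longrightarrow> P j \<inter> P j' = {})"

definition MMS :: "nat \<Rightarrow> (nat \<Rightarrow> nat \<Rightarrow> real) \<Rightarrow> nat \<Rightarrow> nat \<Rightarrow> nat set \<Rightarrow> real" where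
  "MMS m v i d S = Max ((\<lambda>P. Min ((\<lambda>j. val m v i (P j)) ` {1..d})) ` {P. is_partition d S P})"

definition additive_instance :: "nat \<Rightarrow> nat \<Rightarrow> (nat \<Rightarrow> nat \<Rightarrow> real) \<Rightarrow> bool" where
  "additive_instance n m v \<longleftrightarrow> (\<forall>i\<in>{1..n}. \<forall>g\<in>{1..m}. v i g \<ge> 0)"

definition ordered :: "nat \<Rightarrow> nat \<Rightarrow> (nat \<Rightarrow> nat \<Rightarrow> real) \<Rightarrow> bool" where
  "ordered n m v \<longleftrightarrow> (\<forall>i\<in>{1..n}. \<forall>g\<in>{1..m}. \<forall>h\<in>{1..m}. g \<le> h \<longrightarrow> v i g \<ge> v i h)"

definition normalized :: "nat \<Rightarrow> nat \<Rightarrow> (nat \<Rightarrow> nat \<Rightarrow> real) \<Rightarrow> bool" where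
  "normalized n m v \<longleftrightarrow> (\<forall>i\<in>{1..n}. \<exists>P. is_partition n {1..m} P \<and>
       MMS m v i n {1..m} = Min ((\<lambda>j. val m v i (P j)) ` {1..n}) \<and>
       (\<forall>j\<in>{1..n}. val m v i (P j) = 1))"

definition irreducible :: "nat \<Rightarrow> nat \<Rightarrow> (nat \<Rightarrow> nat \<Rightarrow> real) \<Rightarrow> real \<Rightarrow> bool" where
  "irreducible n m v \<alpha> \<longleftrightarrow> (\<forall>i\<in>{1..n}.
      val m v i {1} < \<alpha> \<and>
      val m v i {2*n-1, 2*n, 2*n+1} < \<alpha> \<and>
      val m v i {3*n-2, 3*n-1, 3*n, 3*n+1} < \<alpha> \<and>
      val m v i {1, 2*n+1} < \<alpha>)"

definition ONI :: "real \<Rightarrow> nat \<Rightarrow> nat \<Rightarrow> (nat \<Rightarrow> nat \<Rightarrow> real) \<Rightarrow> bool" where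
  "ONI \<delta> n m v \<longleftrightarrow> additive_instance n m v \<and> ordered n m v \<and> normalized n m v \<and>
      irreducible n m v (3/4 + \<delta>)"

definition initbag :: "nat \<Rightarrow> nat \<Rightarrow> nat set" where
  "initbag n k = {k, 2*n - k + 1}"

definition N1 :: "nat \<Rightarrow> nat \<Rightarrow> (nat \<Rightarrow> nat \<Rightarrow> real) \<Rightarrow> nat set" where
  "N1 n m v = {i\<in>{1..n}. \<forall>k\<in>{1..n}. val m v i (initbag n k) \<le> 1}"

definition N11 :: "real \<Rightarrow> nat \<Rightarrow> nat \<Rightarrow> (nat \<Rightarrow> nat \<Rightarrow> real) \<Rightarrow> nat set" where
  "N11 \<delta> n m v = {i\<in>N1 n m v. val m v i {2*n+1} \<ge> 1/4 - 5*\<delta>}"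

text \<open>Algorithm state: phase (1 or 2), the bag currently processed in phase 2,
  contents of bags 1..n, and the assignment agent |-> bag index.\<close>
record st =
  ph :: nat
  cur :: "nat option"
  bag :: "nat \<Rightarrow> nat set"
  asg :: "nat \<Rightarrow> nat option"

definition agent_free :: "st \<Rightarrow> nat \<Rightarrow> bool" where
  "agent_free s i \<longleftrightarrow> asg s i = None"

definition bag_free :: "st \<Rightarrow> nat \<Rightarrow> bool" where
  "bag_free s k \<longleftrightarrow> (\<forall>i. asg s i \<noteq> Some k)"

definition used :: "nat \<Rightarrow> st \<Rightarrow> nat set" where
  "used n s = (\<Union>k\<in>{1..n}. bag s k)"

definition init_st :: "nat \<Rightarrow> st" where
  "init_st n = \<lparr>ph = 1, cur = None, bag = initbag n, asg = (\<lambda>_. None)\<rparr>"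

definition may_get :: "real \<Rightarrow> nat \<Rightarrow> nat \<Rightarrow> (nat \<Rightarrow> nat \<Rightarrow> real) \<Rightarrow> st \<Rightarrow> nat \<Rightarrow> nat \<Rightarrow> bool" where
  "may_get \<delta> n m v s i k \<longleftrightarrow> i \<in> {1..n} \<and> agent_free s i \<and> val m v i (bag s k) \<ge> 3/4 + \<delta> \<and>
     (i \<in> N11 \<delta> n m v \<or>
      \<not> (\<exists>j\<in>N11 \<delta> n m v. agent_free s j \<and> val m v j (bag s k) \<ge> 3/4 + \<delta>))"

definition someone_wants :: "real \<Rightarrow> nat \<Rightarrow> nat \<Rightarrow> (nat \<Rightarrow> nat \<Rightarrow> real) \<Rightarrow> st \<Rightarrow> nat \<Rightarrow> bool" where
  "someone_wants \<delta> n m v s k \<longleftrightarrow> (\<exists>i\<in>{1..n}. agent_free s i \<and> val m v i (bag s k) \<ge> 3/4 + \<delta>)"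

inductive step :: "real \<Rightarrow> nat \<Rightarrow> nat \<Rightarrow> (nat \<Rightarrow> nat \<Rightarrow> real) \<Rightarrow> st \<Rightarrow> st \<Rightarrow> bool"
  for \<delta> n m v where
  phase1_assign:
    "\<lbrakk> ph s = 1; k \<in> {1..n}; bag_free s k; may_get \<delta> n m v s i k \<rbrakk>
     \<Longrightarrow> step \<delta> n m v s (s\<lparr>asg := (asg s)(i := Some k)\<rparr>)"
| phase1_end:
    "\<lbrakk> ph s = 1; \<not> (\<exists>k\<in>{1..n}. bag_free s k \<and> someone_wants \<delta> n m v s k) \<rbrakk>
     \<Longrightarrow> step \<delta> n m v s (s\<lparr>ph := 2\<rparr>)"
| phase2_pick:
    "\<lbrakk> ph s = 2; cur s = None; k \<in> {1..n}; bag_free s k \<rbrakk>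
     \<Longrightarrow> step \<delta> n m v s (s\<lparr>cur := Some k\<rparr>)"
| phase2_add:
    "\<lbrakk> ph s = 2; cur s = Some k; \<not> someone_wants \<delta> n m v s k;
       g \<in> {1..m}; g \<notin> {1..2*n}; g \<notin> used n s \<rbrakk>
     \<Longrightarrow> step \<delta> n m v s (s\<lparr>bag := (bag s)(k := insert g (bag s k))\<rparr>)"
| phase2_assign:
    "\<lbrakk> ph s = 2; cur s = Some k; may_get \<delta> n m v s i k \<rbrakk>
     \<Longrightarrow> step \<delta> n m v s (s\<lparr>asg := (asg s)(i := Some k), cur := None\<rparr>)"

definition alloc_out :: "nat \<Rightarrow> st \<Rightarrow> nat \<Rightarrow> nat set" where
  "alloc_out m s i = (case asg s i of Some k \<Rightarrow> bag s k \<inter> {1..m} | None \<Rightarrow> {})"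

definition is_allocation :: "nat \<Rightarrow> nat \<Rightarrow> (nat \<Rightarrow> nat set) \<Rightarrow> bool" where
  "is_allocation n m A \<longleftrightarrow> (\<forall>i\<in>{1..n}. A i \<subseteq> {1..m}) \<and>
     (\<forall>i\<in>{1..n}. \<forall>j\<in>{1..n}. i \<noteq> j \<longrightarrow> A i \<inter> A j = {})"

definition beta_MMS :: "nat \<Rightarrow> nat \<Rightarrow> (nat \<Rightarrow> nat \<Rightarrow> real) \<Rightarrow> real \<Rightarrow> (nat \<Rightarrow> nat set) \<Rightarrow> bool" where
  "beta_MMS n m v \<beta> A \<longleftrightarrow> is_allocation n m A \<and>
     (\<forall>i\<in>{1..n}. val m v i (A i) \<ge> \<beta> * MMS m v i n {1..m})"

definition finished :: "nat \<Rightarrow> st \<Rightarrow> bool" where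
  "finished n s \<longleftrightarrow> (\<forall>i\<in>{1..n}. asg s i \<noteq> None)"

end

theory Submission
  imports Defs "HOL-Library.FuncSet"
begin

text \<open>
  Let \<open>\<alpha> = 3/4 + \<delta>\<close>. Along every run of approxMMS1, every agent holding a bag values it at least
  \<open>\<alpha>\<close>, and a free agent \<open>j\<close> values every bag that differs from its initial contents less than
  \<open>\<alpha> + v\<^sub>j(2n+1)\<close>: goods beyond \<open>2n\<close> are worth at most \<open>v\<^sub>j(2n+1)\<close> and are only added to a bag that
  no free agent values at \<open>\<alpha>\<close>. In phase 2 the free initial bags are worth less than \<open>\<alpha>\<close> to free
  agents, and a bag given to an agent outside \<open>N11\<close> is worth less than \<open>\<alpha>\<close> to the free agents of \<open>N11\<close>.

  A run that cannot continue is in phase 2. If an agent \<open>i\<close> were still free, the bag under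
  construction would be unwanted and all goods would lie in the bags, which therefore add up to
  exactly \<open>n\<close> for \<open>i\<close>. This is impossible: for \<open>i \<in> N1 - N11\<close> every bag is worth at most 1 and
  the current one less; for \<open>i \<in> N11\<close> only the fewer than \<open>|N11|\<close> bags owned by \<open>N11\<close> can exceed
  \<open>\<alpha>\<close>, and by at most \<open>1/4 + \<delta>/3\<close>; for \<open>i \<notin> N1\<close> the bags are bounded by
  \<open>max (v\<^sub>i(B\<^sub>k)) (\<alpha> + v\<^sub>i(2n+1))\<close>, and these bounds sum to at most \<open>n\<close>. The last claim is a matching
  argument: pairing the goods \<open>1..2n\<close> within the bundles of an MMS partition, each pair costing the
  larger of its value and the threshold, costs at most \<open>n\<close>, and for ordered values the nested
  pairing \<open>k \<leftrightarrow> 2n+1-k\<close> of the initial bags is the cheapest pairing.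
\<close>

section \<open>Valuations\<close>

definition good_value :: "nat \<Rightarrow> (nat \<Rightarrow> nat \<Rightarrow> real) \<Rightarrow> nat \<Rightarrow> nat \<Rightarrow> real" where
  "good_value m v i g = (if g \<in> {1..m} then v i g else 0)"

lemma val_eq_sum_good_value: "finite S \<Longrightarrow> val m v i S = (\<Sum>g\<in>S. good_value m v i g)"
  unfolding val_def good_value_def by (rule sum.inter_restrict)

lemma val_singleton [simp]: "val m v i {g} = good_value m v i g"
  by (simp add: val_eq_sum_good_value)

lemma val_pair: "p \<noteq> q \<Longrightarrow> val m v i {p, q} = good_value m v i p + good_value m v i q"
  by (simp add: val_eq_sum_good_value)

lemma val_insert: "g \<in> {1..m} \<Longrightarrow> g \<notin> S \<Longrightarrow> val m v i (insert g S) = val m v i S + v i g"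
  unfolding val_def by (subst Int_insert_left_if1) (auto simp: add.commute)

lemma good_value_nonneg: "additive_instance n m v \<Longrightarrow> i \<in> {1..n} \<Longrightarrow> 0 \<le> good_value m v i g"
  unfolding good_value_def additive_instance_def by auto

lemma good_value_antimono:
  assumes "additive_instance n m v" "ordered n m v" "i \<in> {1..n}" "1 \<le> p" "p \<le> q"
  shows "good_value m v i q \<le> good_value m v i p"
  using assms good_value_nonneg[OF assms(1,3), of p]
  unfolding good_value_def ordered_def by auto

lemma val_mono:
  "additive_instance n m v \<Longrightarrow> i \<in> {1..n} \<Longrightarrow> S \<subseteq> T \<Longrightarrow> val m v i S \<le> val m v i T"
  unfolding val_def additive_instance_def by (rule sum_mono2) auto

lemma val_Int_goods: "val m v i (S \<inter> {1..m}) = val m v i S"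
  by (simp add: val_def Int_assoc)

lemma val_le_bundle:
  assumes "additive_instance n m v" "i \<in> {1..n}" "val m v i P = 1" "S \<inter> {1..m} \<subseteq> P"
  shows "val m v i S \<le> 1"
  using val_mono[OF assms(1,2,4)] assms(3) val_Int_goods[of m v i S] by linarith

lemma partition_choice:
  assumes "is_partition n {1..m} P"
  obtains part where "\<And>g. g \<in> {1..m} \<Longrightarrow> part g \<in> {1..n} \<and> g \<in> P (part g)"
proof -
  have "\<forall>g\<in>{1..m}. \<exists>j. j \<in> {1..n} \<and> g \<in> P j" using assms unfolding is_partition_def by blast
  then show thesis using that by metis
qed

lemma val_UN_disjoint:
  assumes "finite K" "\<And>k k'. k \<in> K \<Longrightarrow> k' \<in> K \<Longrightarrow> k \<noteq> k' \<Longrightarrow> F k \<inter> F k' = {}"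
  shows "val m v i (\<Union>k\<in>K. F k) = (\<Sum>k\<in>K. val m v i (F k))"
proof -
  have "(\<Union>k\<in>K. F k) \<inter> {1..m} = (\<Union>k\<in>K. F k \<inter> {1..m})" by blast
  then have "val m v i (\<Union>k\<in>K. F k) = (\<Sum>g\<in>(\<Union>k\<in>K. F k \<inter> {1..m}). v i g)"
    by (simp add: val_def)
  also have "\<dots> = (\<Sum>k\<in>K. \<Sum>g\<in>F k \<inter> {1..m}. v i g)"
    by (rule sum.UNION_disjoint) (use assms in auto)
  finally show ?thesis by (simp add: val_def)
qed

lemma normalized_partition:
  assumes "normalized n m v" "i \<in> {1..n}"
  obtains P where "is_partition n {1..m} P" "\<And>j. j \<in> {1..n} \<Longrightarrow> val m v i (P j) = 1"
proof -
  from assms obtain P where "is_partition n {1..m} P" "\<forall>j\<in>{1..n}. val m v i (P j) = 1"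
    unfolding normalized_def by blast
  with that show thesis by blast
qed

lemma val_all_goods:
  assumes "normalized n m v" "i \<in> {1..n}"
  shows "val m v i {1..m} = n"
proof -
  obtain P where P: "is_partition n {1..m} P" "\<And>j. j \<in> {1..n} \<Longrightarrow> val m v i (P j) = 1"
    using normalized_partition[OF assms] by metis
  have "val m v i {1..m} = val m v i (\<Union>j\<in>{1..n}. P j)"
    using P(1) by (simp add: is_partition_def)
  also have "\<dots> = (\<Sum>j\<in>{1..n}. val m v i (P j))"
    using P(1) by (intro val_UN_disjoint) (auto simp: is_partition_def)
  finally show ?thesis using P(2) by simp
qed

lemma MMS_eq_1:
  assumes "normalized n m v" "i \<in> {1..n}"
  shows "MMS m v i n {1..m} = 1"
proof -
  obtain P where P: "MMS m v i n {1..m} = Min ((\<lambda>j. val m v i (P j)) ` {1..n})"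
      "\<forall>j\<in>{1..n}. val m v i (P j) = 1"
    using assms unfolding normalized_def by blast
  have "(\<lambda>j. val m v i (P j)) ` {1..n} = {1}" using P(2) assms(2) by force
  then show ?thesis using P(1) by simp
qed

lemma initbag_subset: "k \<in> {1..n} \<Longrightarrow> initbag n k \<subseteq> {1..2*n}"
  by (auto simp: initbag_def)

lemma initbag_disjoint:
  "k \<in> {1..n} \<Longrightarrow> k' \<in> {1..n} \<Longrightarrow> k \<noteq> k' \<Longrightarrow> initbag n k \<inter> initbag n k' = {}"
  by (auto simp: initbag_def)

lemma UN_initbag: "(\<Union>k\<in>{1..n}. initbag n k) = {1..2*n}"
proof
  show "{1..2*n} \<subseteq> (\<Union>k\<in>{1..n}. initbag n k)"
  proof
    fix g assume g: "g \<in> {1..2*n}"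
    show "g \<in> (\<Union>k\<in>{1..n}. initbag n k)"
    proof (cases "g \<le> n")
      case True with g show ?thesis by (auto simp: initbag_def)
    next
      case False with g show ?thesis by (intro UN_I[of "2*n - g + 1"]) (auto simp: initbag_def)
    qed
  qed
qed (auto simp: initbag_def)

lemma val_initbag:
  "k \<in> {1..n} \<Longrightarrow> val m v i (initbag n k) = good_value m v i k + good_value m v i (2*n - k + 1)"
  unfolding initbag_def by (rule val_pair) auto

section \<open>Perfect matchings under antitone weights\<close>

definition perfect_matching :: "nat set \<Rightarrow> (nat \<Rightarrow> nat) \<Rightarrow> bool" where
  "perfect_matching S \<sigma> \<longleftrightarrow> (\<forall>x\<in>S. \<sigma> x \<in> S \<and> \<sigma> (\<sigma> x) = x \<and> \<sigma> x \<noteq> x)"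

text \<open>Every pair \<open>{x, \<sigma> x}\<close> is counted twice.\<close>
definition pairing_cost :: "(nat \<Rightarrow> real) \<Rightarrow> real \<Rightarrow> nat set \<Rightarrow> (nat \<Rightarrow> nat) \<Rightarrow> real" where
  "pairing_cost w c S \<sigma> = (\<Sum>x\<in>S. max (w x + w (\<sigma> x)) c)"

lemma perfect_matchingD:
  assumes "perfect_matching S \<sigma>" "x \<in> S"
  shows "\<sigma> x \<in> S" "\<sigma> (\<sigma> x) = x" "\<sigma> x \<noteq> x"
  using assms unfolding perfect_matching_def by auto

lemma perfect_matching_empty: "perfect_matching {} \<sigma>"
  by (simp add: perfect_matching_def)

lemma perfect_matching_add_pair:
  assumes "perfect_matching S \<sigma>" "p \<notin> S" "q \<notin> S" "p \<noteq> q"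
  shows "perfect_matching (insert p (insert q S)) (\<sigma>(p := q, q := p))"
proof -
  have "\<sigma> x \<in> S" if "x \<in> S" for x using assms(1) that unfolding perfect_matching_def by blast
  then show ?thesis using assms unfolding perfect_matching_def by auto
qed

lemma pairing_cost_add_pair:
  assumes "perfect_matching S \<sigma>" "p \<notin> S" "q \<notin> S" "p \<noteq> q" "finite S"
  shows "pairing_cost w c (insert p (insert q S)) (\<sigma>(p := q, q := p))
           = pairing_cost w c S \<sigma> + 2 * max (w p + w q) c"
proof -
  have "\<sigma> x \<in> S" if "x \<in> S" for x using assms(1) that unfolding perfect_matching_def by blast
  then have "(\<Sum>x\<in>S. max (w x + w ((\<sigma>(p := q, q := p)) x)) c) = pairing_cost w c S \<sigma>"
    unfolding pairing_cost_def by (intro sum.cong) (use assms(2,3) in auto)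
  then show ?thesis using assms by (simp add: pairing_cost_def algebra_simps)
qed

lemma perfect_matching_remove_pair:
  assumes "perfect_matching S \<sigma>" "p \<in> S" "\<sigma> p = q"
  shows "perfect_matching (S - {p, q}) \<sigma>"
  using assms unfolding perfect_matching_def by (metis Diff_iff insert_iff singletonD)

lemma pairing_cost_remove_pair:
  assumes "perfect_matching S \<sigma>" "p \<in> S" "\<sigma> p = q" "finite S"
  shows "pairing_cost w c S \<sigma> = pairing_cost w c (S - {p, q}) \<sigma> + 2 * max (w p + w q) c"
proof -
  have q: "q \<in> S" "\<sigma> q = p" "p \<noteq> q" using assms unfolding perfect_matching_def by auto
  have "S = insert p (insert q (S - {p, q}))" using assms(2) q(1) by blast
  moreover have "\<sigma> = \<sigma>(p := q, q := p)" using assms(3) q(2) by auto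
  ultimately have "pairing_cost w c S \<sigma>
      = pairing_cost w c (insert p (insert q (S - {p, q}))) (\<sigma>(p := q, q := p))" by simp
  also have "\<dots> = pairing_cost w c (S - {p, q}) \<sigma> + 2 * max (w p + w q) c"
    using perfect_matching_remove_pair[OF assms(1-3)] q(3) assms(4)
    by (intro pairing_cost_add_pair) auto
  finally show ?thesis .
qed

lemma perfect_matching_distinct_partners:
  assumes \<sigma>: "perfect_matching S \<sigma>" and "a \<in> S" "b \<in> S" "a \<noteq> b" "\<sigma> a \<noteq> b"
  shows "distinct [a, b, \<sigma> a, \<sigma> b]"
proof -
  have "\<sigma> a \<noteq> a" "\<sigma> b \<noteq> b" "\<sigma> (\<sigma> a) = a" "\<sigma> (\<sigma> b) = b"
    using perfect_matchingD[OF \<sigma>] assms(2,3) by auto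
  then show ?thesis using assms(4,5) by auto
qed

lemma perfect_matching_swap:
  assumes \<sigma>: "perfect_matching S \<sigma>" and ab: "a \<in> S" "b \<in> S" "a \<noteq> b" "\<sigma> a \<noteq> b"
  shows "perfect_matching S (\<sigma>(a := b, b := a, \<sigma> a := \<sigma> b, \<sigma> b := \<sigma> a))" (is "perfect_matching S ?\<tau>")
  unfolding perfect_matching_def
proof
  fix x assume x: "x \<in> S"
  have distinct: "distinct [a, b, \<sigma> a, \<sigma> b]" by (rule perfect_matching_distinct_partners[OF assms])
  note \<sigma>a = perfect_matchingD[OF \<sigma> ab(1)] and \<sigma>b = perfect_matchingD[OF \<sigma> ab(2)]
  show "?\<tau> x \<in> S \<and> ?\<tau> (?\<tau> x) = x \<and> ?\<tau> x \<noteq> x"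
  proof (cases "x \<in> {a, b, \<sigma> a, \<sigma> b}")
    case True then show ?thesis using distinct ab \<sigma>a(1) \<sigma>b(1) by auto
  next
    case False
    note \<sigma>x = perfect_matchingD[OF \<sigma> x]
    have "\<sigma> x \<notin> {a, b, \<sigma> a, \<sigma> b}"
    proof
      assume "\<sigma> x \<in> {a, b, \<sigma> a, \<sigma> b}"
      then have "\<sigma> (\<sigma> x) \<in> \<sigma> ` {a, b, \<sigma> a, \<sigma> b}" by (rule imageI)
      then show False using False \<sigma>x(2) \<sigma>a(2) \<sigma>b(2) by auto
    qed
    then show ?thesis using False \<sigma>x by simp
  qed
qed

text \<open>The witness re-pairs \<open>lo\<close>, \<open>hi\<close> and their partners \<open>j\<close>, \<open>i\<close> as \<open>{lo, hi}\<close> and \<open>{i, j}\<close>.\<close>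
lemma perfect_matching_exchange:
  fixes w :: "nat \<Rightarrow> real"
  assumes w: "antimono w" and \<sigma>: "perfect_matching S \<sigma>" and "finite S"
    and lo: "lo \<in> S" and hi: "hi \<in> S" and bounds: "\<And>x. x \<in> S \<Longrightarrow> lo \<le> x \<and> x \<le> hi"
  obtains \<tau> where "perfect_matching S \<tau>" "\<tau> lo = hi" "pairing_cost w c S \<tau> \<le> pairing_cost w c S \<sigma>"
proof (cases "\<sigma> lo = hi")
  case True
  with \<sigma> that show thesis by blast
next
  case False
  define i j where "i = \<sigma> hi" and "j = \<sigma> lo"
  have "lo \<noteq> hi" using bounds[OF perfect_matchingD(1)[OF \<sigma> lo]] perfect_matchingD(3)[OF \<sigma> lo] by auto
  then have distinct: "distinct [lo, hi, j, i]"
    unfolding i_def j_def by (rule perfect_matching_distinct_partners[OF \<sigma> lo hi _ False])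
  have i: "i \<in> S" "\<sigma> i = hi" and j: "j \<in> S" "\<sigma> j = lo"
    using perfect_matchingD[OF \<sigma> lo] perfect_matchingD[OF \<sigma> hi] unfolding i_def j_def by auto
  define \<tau> where "\<tau> = \<sigma>(lo := hi, hi := lo, j := i, i := j)"
  have "perfect_matching S \<tau>"
    unfolding \<tau>_def i_def j_def by (rule perfect_matching_swap[OF \<sigma> lo hi \<open>lo \<noteq> hi\<close> False])
  moreover have \<tau>: "\<tau> lo = hi" "\<tau> hi = lo" "\<tau> i = j" "\<tau> j = i" "\<And>x. x \<notin> {lo, hi, i, j} \<Longrightarrow> \<tau> x = \<sigma> x"
    using distinct unfolding \<tau>_def by auto
  moreover have "pairing_cost w c S \<tau> \<le> pairing_cost w c S \<sigma>"
  proof -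
    let ?D = "{lo, hi, i, j}" and ?f = "\<lambda>\<rho> x. max (w x + w (\<rho> x)) c"
    have D: "?D \<subseteq> S" using lo hi i(1) j(1) by auto
    have rest: "(\<Sum>x\<in>S - ?D. ?f \<tau> x) = (\<Sum>x\<in>S - ?D. ?f \<sigma> x)"
      using \<tau>(5) by (intro sum.cong) auto
    have "w hi \<le> w j" "w i \<le> w lo" using w bounds i(1) j(1) by (auto simp: antimono_def)
    then have "(\<Sum>x\<in>?D. ?f \<tau> x) \<le> (\<Sum>x\<in>?D. ?f \<sigma> x)"
      using distinct \<tau>(1-4) i(2) j(2) by (auto simp: i_def[symmetric] j_def[symmetric] max_def)
    then show ?thesis
      unfolding pairing_cost_def using rest
        sum.subset_diff[OF D \<open>finite S\<close>, of "?f \<tau>"] sum.subset_diff[OF D \<open>finite S\<close>, of "?f \<sigma>"]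
      by linarith
  qed
  ultimately show thesis using that by blast
qed

text \<open>The left-hand side is the cost of the nested pairing \<open>lo + t \<leftrightarrow> lo + 2h - 1 - t\<close>.\<close>
lemma nested_pairing_cost_le:
  fixes w :: "nat \<Rightarrow> real"
  assumes w: "antimono w"
  shows "perfect_matching {lo..<lo+2*h} \<sigma> \<Longrightarrow>
    2 * (\<Sum>t<h. max (w (lo+t) + w (lo+2*h-1-t)) c) \<le> pairing_cost w c {lo..<lo+2*h} \<sigma>"
proof (induction h arbitrary: lo \<sigma>)
  case 0 then show ?case by (simp add: pairing_cost_def)
next
  case (Suc h)
  let ?S = "{lo..<lo+2*Suc h}" and ?hi = "lo + 2*h + 1"
  obtain \<tau> where \<tau>: "perfect_matching ?S \<tau>" "\<tau> lo = ?hi"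
      "pairing_cost w c ?S \<tau> \<le> pairing_cost w c ?S \<sigma>"
    by (rule perfect_matching_exchange[OF w Suc.prems, where lo = lo and hi = ?hi and c = c]) auto
  have inner: "?S - {lo, ?hi} = {lo+1..<lo+1+2*h}" by auto
  have "2 * (\<Sum>t<Suc h. max (w (lo+t) + w (lo+2*Suc h-1-t)) c)
      = 2 * max (w lo + w ?hi) c + 2 * (\<Sum>t<h. max (w (lo+1+t) + w (lo+1+2*h-1-t)) c)"
    by (subst sum.lessThan_Suc_shift) (simp add: Suc_diff_Suc numeral_2_eq_2)
  also have "\<dots> \<le> 2 * max (w lo + w ?hi) c + pairing_cost w c {lo+1..<lo+1+2*h} \<tau>"
    using Suc.IH[of "lo+1" \<tau>] perfect_matching_remove_pair[OF \<tau>(1) _ \<tau>(2)] inner by simp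
  also have "\<dots> = pairing_cost w c ?S \<tau>"
    using pairing_cost_remove_pair[OF \<tau>(1) _ \<tau>(2)] inner by simp
  also have "\<dots> \<le> pairing_cost w c ?S \<sigma>" by (rule \<tau>(3))
  finally show ?case .
qed

section \<open>Budgeted bundles\<close>

definition without_two_least :: "nat set \<Rightarrow> nat set" where
  "without_two_least Z = {x\<in>Z. 2 \<le> card (Z \<inter> {..<x})}"

definition excess :: "(nat \<Rightarrow> real) \<Rightarrow> real \<Rightarrow> nat set \<Rightarrow> real" where
  "excess w a Z = (\<Sum>x\<in>without_two_least Z. max 0 (w x - a))"

lemma excess_nonneg: "0 \<le> excess w a Z"
  unfolding excess_def by (rule sum_nonneg) simp

lemma two_elements_below:
  assumes "x \<in> without_two_least Z"
  obtains y1 y2 where "y1 \<in> Z" "y2 \<in> Z" "y1 < x" "y2 < x" "y1 \<noteq> y2"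
proof -
  have "Suc (Suc 0) \<le> card (Z \<inter> {..<x})"
    using assms unfolding without_two_least_def numeral_2_eq_2 by blast
  then obtain y1 B where "Z \<inter> {..<x} = insert y1 B" "y1 \<notin> B" "Suc 0 \<le> card B"
    unfolding card_le_Suc_iff by blast
  moreover from this obtain y2 where "y2 \<in> B" by fastforce
  ultimately show thesis using that by blast
qed

lemma excess_remove_Max:
  assumes "finite Z" "3 \<le> card Z"
  shows "excess w a (Z - {Max Z}) = excess w a Z - max 0 (w (Max Z) - a)"
proof -
  let ?e = "Max Z"
  have "Z \<noteq> {}" using assms(2) by auto
  then have e: "?e \<in> Z" "\<And>y. y \<in> Z \<Longrightarrow> y \<le> ?e" using assms(1) by auto
  have "Z \<inter> {..<?e} = Z - {?e}" using e(2) by fastforce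
  then have "?e \<in> without_two_least Z"
    using e(1) assms unfolding without_two_least_def by (simp add: card_Diff_singleton)
  moreover have "without_two_least (Z - {?e}) = without_two_least Z - {?e}"
  proof -
    have "(Z - {?e}) \<inter> {..<x} = Z \<inter> {..<x}" if "x \<in> Z" for x using e(2)[OF that] by auto
    then show ?thesis unfolding without_two_least_def by auto
  qed
  moreover have "finite (without_two_least Z)" using assms(1) unfolding without_two_least_def by simp
  ultimately show ?thesis unfolding excess_def by (simp add: sum_diff1)
qed

lemma sum_max_0_le:
  fixes w :: "nat \<Rightarrow> real"
  assumes "finite X" "\<And>x. x \<in> X \<Longrightarrow> 0 \<le> w x" "0 \<le> a"
  shows "(\<Sum>x\<in>X. max 0 (w x - a)) \<le> max 0 (sum w X - a)"
  using assms
proof (induction X rule: finite_induct)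
  case (insert x X)
  have "0 \<le> w x" "0 \<le> sum w X" using insert.prems by (auto intro: sum_nonneg)
  moreover have "(\<Sum>x\<in>X. max 0 (w x - a)) \<le> max 0 (sum w X - a)" using insert by simp
  ultimately show ?case using insert.hyps \<open>0 \<le> a\<close> by (auto simp: max_def split: if_splits)
qed simp

text \<open>The least element \<open>h\<close> of \<open>without_two_least Z\<close> weighs at most as much as each of the two
  least elements of \<open>Z\<close>.\<close>
lemma weight_without_two_least:
  fixes w :: "nat \<Rightarrow> real"
  assumes "finite Z" and w: "\<And>x. 0 \<le> w x" "antimono w"
    and h: "h \<in> without_two_least Z" "\<And>x. x \<in> without_two_least Z \<Longrightarrow> h \<le> x"
  shows "3 * w h + sum w (without_two_least Z - {h}) \<le> sum w Z"
proof -
  let ?X = "without_two_least Z"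
  have X: "?X \<subseteq> Z" "finite ?X" using \<open>finite Z\<close> by (auto simp: without_two_least_def)
  obtain y1 y2 where y: "y1 \<in> Z" "y2 \<in> Z" "y1 < h" "y2 < h" "y1 \<noteq> y2"
    using two_elements_below[OF h(1)] .
  have "w h \<le> w y1" "w h \<le> w y2" using w(2) y by (auto simp: antimono_def)
  have "y1 \<notin> ?X" "y2 \<notin> ?X" using y h(2) by force+
  then have "sum w ({y1, y2} \<union> ?X) = w y1 + w y2 + (w h + sum w (?X - {h}))"
    using X(2) y(5) sum.remove[OF X(2) h(1)] by (simp add: sum.union_disjoint)
  moreover have "sum w ({y1, y2} \<union> ?X) \<le> sum w Z"
    using X(1) y(1,2) w(1) by (intro sum_mono2[OF \<open>finite Z\<close>]) auto
  ultimately show ?thesis using \<open>w h \<le> w y1\<close> \<open>w h \<le> w y2\<close> by linarith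
qed

lemma excess_le:
  fixes w :: "nat \<Rightarrow> real"
  assumes "finite Z" and w: "\<And>x. 0 \<le> w x" "antimono w" and "sum w Z \<le> 1" "0 \<le> a" "a \<le> 1/4"
  shows "excess w a Z \<le> max (1/3 - a) (1 - 4*a)"
proof (cases "without_two_least Z = {}")
  case True then show ?thesis using \<open>a \<le> 1/4\<close> by (simp add: excess_def)
next
  case False
  let ?X = "without_two_least Z"
  have X: "finite ?X" using \<open>finite Z\<close> by (auto simp: without_two_least_def)
  define h where "h = Min ?X"
  have h: "h \<in> ?X" "\<And>x. x \<in> ?X \<Longrightarrow> h \<le> x" using X False by (auto simp: h_def)
  define R where "R = sum w (?X - {h})"
  have R: "0 \<le> R" using w(1) by (simp add: R_def sum_nonneg)
  have total: "3 * w h + R \<le> 1"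
    using weight_without_two_least[OF \<open>finite Z\<close> w h] \<open>sum w Z \<le> 1\<close> unfolding R_def by linarith
  have split: "excess w a Z = max 0 (w h - a) + (\<Sum>x\<in>?X - {h}. max 0 (w x - a))"
    unfolding excess_def using sum.remove[OF X h(1)] .
  show ?thesis
  proof (cases "w h \<le> a")
    case True
    have "w x \<le> a" if "x \<in> ?X - {h}" for x
    proof -
      have "w x \<le> w h" using w(2) h(2) that by (simp add: antimono_def)
      then show ?thesis using True by simp
    qed
    then have "excess w a Z = 0" using split True by simp
    then show ?thesis using \<open>a \<le> 1/4\<close> by simp
  next
    case False
    have "(\<Sum>x\<in>?X - {h}. max 0 (w x - a)) \<le> max 0 (R - a)"
      unfolding R_def using X w(1) \<open>0 \<le> a\<close> by (intro sum_max_0_le) auto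
    then show ?thesis using split False total R by (simp add: max_def split: if_splits)
  qed
qed

definition matchable :: "(nat \<Rightarrow> real) \<Rightarrow> real \<Rightarrow> nat set \<Rightarrow> real \<Rightarrow> bool" where
  "matchable w c S B \<longleftrightarrow> (\<exists>\<sigma>. perfect_matching S \<sigma> \<and> pairing_cost w c S \<sigma> \<le> B)"

lemma matchable_add_pair:
  assumes "matchable w c S B" "finite S" "p \<notin> S" "q \<notin> S" "p \<noteq> q" "max (w p + w q) c \<le> \<beta>"
  shows "matchable w c (insert p (insert q S)) (B + 2 * \<beta>)"
proof -
  obtain \<sigma> where \<sigma>: "perfect_matching S \<sigma>" "pairing_cost w c S \<sigma> \<le> B"
    using assms(1) unfolding matchable_def by blast
  have "pairing_cost w c (insert p (insert q S)) (\<sigma>(p := q, q := p)) \<le> B + 2 * \<beta>"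
    unfolding pairing_cost_add_pair[OF \<sigma>(1) assms(3-5,2)] using \<sigma>(2) assms(6) by (intro add_mono) simp_all
  then show ?thesis
    unfolding matchable_def using perfect_matching_add_pair[OF \<sigma>(1) assms(3-5)] by blast
qed

definition within_budget :: "(nat \<Rightarrow> real) \<Rightarrow> real \<Rightarrow> real \<Rightarrow> nat set \<Rightarrow> real \<Rightarrow> bool" where
  "within_budget w a c Z \<beta> \<longleftrightarrow> finite Z \<and> sum w Z \<le> \<beta> \<and> (card Z \<le> 1 \<longrightarrow> \<beta> = 1) \<and>
     (2 \<le> card Z \<longrightarrow> c + excess w a Z \<le> \<beta>)"

definition budgeted_bundles ::
    "(nat \<Rightarrow> real) \<Rightarrow> real \<Rightarrow> real \<Rightarrow> nat set \<Rightarrow> (nat \<Rightarrow> nat set) \<Rightarrow> (nat \<Rightarrow> real) \<Rightarrow> bool" where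
  "budgeted_bundles w a c J Z b \<longleftrightarrow> finite J \<and>
     (\<forall>j\<in>J. \<forall>j'\<in>J. j \<noteq> j' \<longrightarrow> Z j \<inter> Z j' = {}) \<and> card (\<Union>j\<in>J. Z j) = 2 * card J \<and>
     (\<forall>j\<in>J. within_budget w a c (Z j) (b j))"

lemma within_budget_singleton: "w x \<le> 1 \<Longrightarrow> within_budget w a c {x} 1"
  by (simp add: within_budget_def)

lemma within_budget_remove_Max:
  fixes w :: "nat \<Rightarrow> real"
  assumes "within_budget w a c Z \<beta>" "3 \<le> card Z" "\<And>x. 0 \<le> w x" "0 \<le> a"
  shows "within_budget w a c (Z - {Max Z}) (\<beta> - max 0 (w (Max Z) - a))"
proof -
  have fin: "finite Z" using assms(1) by (simp add: within_budget_def)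
  then have e: "Max Z \<in> Z" using assms(2) by (intro Max_in) auto
  have "sum w Z = w (Max Z) + sum w (Z - {Max Z})" using sum.remove[OF fin e] .
  moreover have "max 0 (w (Max Z) - a) \<le> w (Max Z)" using assms(3,4) by simp
  moreover have "card (Z - {Max Z}) = card Z - 1" using e fin by simp
  ultimately show ?thesis
    using assms(1,2) excess_remove_Max[OF fin assms(2)] by (auto simp: within_budget_def)
qed

lemma within_budget_mono:
  "within_budget w a c Z \<beta> \<Longrightarrow> 2 \<le> card Z \<Longrightarrow> \<beta> \<le> \<beta>' \<Longrightarrow> within_budget w a c Z \<beta>'"
  by (auto simp: within_budget_def)

lemma budgeted_bundlesD:
  assumes "budgeted_bundles w a c J Z b"
  shows "finite J" "\<And>j j'. j \<in> J \<Longrightarrow> j' \<in> J \<Longrightarrow> j \<noteq> j' \<Longrightarrow> Z j \<inter> Z j' = {}"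
    "card (\<Union>j\<in>J. Z j) = 2 * card J" "\<And>j. j \<in> J \<Longrightarrow> within_budget w a c (Z j) (b j)"
    "\<And>j. j \<in> J \<Longrightarrow> finite (Z j)"
  using assms unfolding budgeted_bundles_def within_budget_def by blast+

lemma budgeted_bundles_sum_card:
  assumes "budgeted_bundles w a c J Z b"
  shows "(\<Sum>j\<in>J. card (Z j)) = 2 * card J"
  using budgeted_bundlesD[OF assms] by (simp add: card_UN_disjoint)

abbreviation bundles_measure :: "nat set \<Rightarrow> (nat \<Rightarrow> nat set) \<Rightarrow> nat" where
  "bundles_measure J Z \<equiv> card (\<Union>j\<in>J. Z j) + card {j\<in>J. Z j = {}}"

lemma budgeted_bundles_reduce_pair:
  assumes B: "budgeted_bundles w a c J Z b" and j: "j \<in> J" "card (Z j) = 2"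
  obtains J' Z' b' where "budgeted_bundles w a c J' Z' b'" "bundles_measure J' Z' < bundles_measure J Z"
    "matchable w c (\<Union>j\<in>J'. Z' j) (2 * sum b' J') \<Longrightarrow> matchable w c (\<Union>j\<in>J. Z j) (2 * sum b J)"
proof
  note D = budgeted_bundlesD[OF B]
  obtain p q where pq: "Z j = {p, q}" "p \<noteq> q" using j(2) by (meson card_2_iff)
  let ?U = "\<Union>k\<in>J - {j}. Z k"
  have U: "(\<Union>k\<in>J. Z k) = insert p (insert q ?U)" "p \<notin> ?U" "q \<notin> ?U"
    using D(2) j(1) pq(1) by blast+
  have fin: "finite ?U" using D(1,5) by blast
  have card_U: "card ?U + 2 = 2 * card J" using D(3) U fin pq(2) by simp
  then have "card ?U = 2 * card (J - {j})" using D(1) j(1) by simp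
  then show "budgeted_bundles w a c (J - {j}) Z b" using B unfolding budgeted_bundles_def by auto
  have "card {k\<in>J - {j}. Z k = {}} \<le> card {k\<in>J. Z k = {}}" using D(1) by (intro card_mono) auto
  then show "bundles_measure (J - {j}) Z < bundles_measure J Z" using card_U D(3) by linarith
  assume "matchable w c ?U (2 * sum b (J - {j}))"
  moreover have "max (w p + w q) c \<le> b j"
    using D(4)[OF j(1)] j(2) excess_nonneg[of w a "Z j"] pq by (simp add: within_budget_def)
  ultimately have "matchable w c (insert p (insert q ?U)) (2 * sum b (J - {j}) + 2 * b j)"
    by (rule matchable_add_pair[OF _ fin U(2,3) pq(2)])
  then show "matchable w c (\<Union>j\<in>J. Z j) (2 * sum b J)"
    using U(1) sum.remove[OF D(1) j(1), of b] by (simp add: algebra_simps)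
qed

lemma UN_move_to_empty:
  assumes "j0 \<in> J" "Z j0 = {}" "j1 \<in> J" "e \<in> Z j1"
  shows "(\<Union>j\<in>J. (Z(j0 := {e}, j1 := Z j1 - {e})) j) = (\<Union>j\<in>J. Z j)" (is "?U' = ?U")
proof (intro equalityI subsetI)
  have "j0 \<noteq> j1" using assms(2,4) by auto
  fix x
  show "x \<in> ?U" if x: "x \<in> ?U'"
  proof -
    obtain k where "k \<in> J" "x \<in> (Z(j0 := {e}, j1 := Z j1 - {e})) k" using x by blast
    then show ?thesis using assms(3,4) \<open>j0 \<noteq> j1\<close> by (cases "k = j0"; cases "k = j1") auto
  qed
  show "x \<in> ?U'" if x: "x \<in> ?U"
  proof -
    obtain k where k: "k \<in> J" "x \<in> Z k" using x by blast
    then have "k \<noteq> j0" using assms(2) by auto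
    show ?thesis
    proof (cases "k = j1 \<and> x = e")
      case True then show ?thesis using assms(1) \<open>j0 \<noteq> j1\<close> by (intro UN_I[of j0]) auto
    next
      case False then show ?thesis using k \<open>k \<noteq> j0\<close> by (intro UN_I[of k]) auto
    qed
  qed
qed

lemma UN_remove_singleton_and_element:
  assumes disj: "\<And>j j'. j \<in> J \<Longrightarrow> j' \<in> J \<Longrightarrow> j \<noteq> j' \<Longrightarrow> Z j \<inter> Z j' = {}"
    and j0: "j0 \<in> J" "Z j0 = {g}" and j1: "j1 \<in> J" "e \<in> Z j1" and "j0 \<noteq> j1"
  defines "U \<equiv> \<Union>j\<in>J - {j0}. (Z(j1 := Z j1 - {e})) j"
  shows "(\<Union>j\<in>J. Z j) = insert g (insert e U)" "g \<notin> U" "e \<notin> U"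
proof -
  have "(\<Union>j\<in>J. Z j) = Z j0 \<union> Z j1 \<union> (\<Union>j\<in>J - {j0, j1}. Z j)" using j0(1) j1(1) by blast
  moreover have "U = (Z j1 - {e}) \<union> (\<Union>j\<in>J - {j0, j1}. Z j)"
    unfolding U_def using j1(1) \<open>j0 \<noteq> j1\<close> by (auto split: if_splits)
  moreover have "g \<notin> Z j" "e \<notin> Z j" if "j \<in> J - {j0, j1}" for j
    using disj[OF j0(1), of j] disj[OF j1(1), of j] that j0(2) j1(2) by auto
  moreover have "g \<notin> Z j1" using disj[OF j0(1) j1(1) \<open>j0 \<noteq> j1\<close>] j0(2) by auto
  ultimately show "(\<Union>j\<in>J. Z j) = insert g (insert e U)" "g \<notin> U" "e \<notin> U"
    using j0(2) j1(2) by auto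
qed

lemma budgeted_bundles_move_Max:
  fixes w :: "nat \<Rightarrow> real"
  assumes B: "budgeted_bundles w a c J Z b" and w: "\<And>x. 0 \<le> w x" "\<And>x. w x \<le> 1 - a" and "0 \<le> a"
    and j0: "j0 \<in> J" "Z j0 = {}" and j1: "j1 \<in> J" "3 \<le> card (Z j1)" and e: "e = Max (Z j1)"
  shows "budgeted_bundles w a c J (Z(j0 := {e}, j1 := Z j1 - {e})) b"
proof -
  note D = budgeted_bundlesD[OF B]
  let ?Z = "Z(j0 := {e}, j1 := Z j1 - {e})"
  have e_in: "e \<in> Z j1" using D(5)[OF j1(1)] j1(2) unfolding e by (intro Max_in) auto
  then have "j0 \<noteq> j1" using j0(2) by auto
  have "within_budget w a c (?Z k) (b k)" if "k \<in> J" for k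
  proof -
    have "b j0 = 1" using D(4)[OF j0(1)] j0(2) by (simp add: within_budget_def)
    moreover have "card (Z j1 - {e}) = card (Z j1) - 1" using e_in D(5)[OF j1(1)] by simp
    have "within_budget w a c (Z j1 - {e}) (b j1)"
      by (rule within_budget_mono[OF within_budget_remove_Max[OF D(4)[OF j1(1)] j1(2) w(1) \<open>0 \<le> a\<close>,
            folded e]]) (use \<open>card (Z j1 - {e}) = card (Z j1) - 1\<close> j1(2) in auto)
    ultimately show ?thesis
      using D(4)[OF that] w(2)[of e] \<open>0 \<le> a\<close> within_budget_singleton[of w e] \<open>j0 \<noteq> j1\<close>
      by (cases "k = j0"; cases "k = j1") auto
  qed
  moreover have "?Z k \<inter> ?Z k' = {}" if "k \<in> J" "k' \<in> J" "k \<noteq> k'" for k k'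
    using D(2)[OF that] D(2)[OF j1(1)] e_in that j0(2) by (auto simp: disjoint_iff)
  ultimately show ?thesis
    using D(1,3) UN_move_to_empty[OF j0 j1(1) e_in] by (simp add: budgeted_bundles_def)
qed

lemma budgeted_bundles_remove_singleton:
  fixes w :: "nat \<Rightarrow> real"
  assumes B: "budgeted_bundles w a c J Z b" and "\<And>x. 0 \<le> w x" "0 \<le> a"
    and j0: "j0 \<in> J" "Z j0 = {g}" and j1: "j1 \<in> J" "3 \<le> card (Z j1)" and e: "e = Max (Z j1)"
  shows "budgeted_bundles w a c (J - {j0}) (Z(j1 := Z j1 - {e})) (b(j1 := b j1 - max 0 (w e - a)))"
proof -
  note D = budgeted_bundlesD[OF B]
  let ?Z = "Z(j1 := Z j1 - {e})" and ?U = "\<Union>k\<in>J - {j0}. (Z(j1 := Z j1 - {e})) k"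
  have e_in: "e \<in> Z j1" using D(5)[OF j1(1)] j1(2) unfolding e by (intro Max_in) auto
  have "j0 \<noteq> j1" using j0(2) j1(2) by auto
  then have "g \<noteq> e" using D(2)[OF j0(1) j1(1)] j0(2) e_in by blast
  note U = UN_remove_singleton_and_element[OF D(2) j0 j1(1) e_in \<open>j0 \<noteq> j1\<close>]
  have "finite ?U" using D(1,5) by (auto intro: finite_subset[of _ "Z _"])
  then have "card ?U + 2 = card (\<Union>k\<in>J. Z k)" using U \<open>g \<noteq> e\<close> by (simp del: fun_upd_apply)
  then have "card ?U = 2 * card (J - {j0})" using D(1,3) j0(1) by simp
  moreover have "within_budget w a c (?Z k) ((b(j1 := b j1 - max 0 (w e - a))) k)" if "k \<in> J - {j0}" for k
    using within_budget_remove_Max[OF D(4)[OF j1(1)] j1(2) assms(2,3), folded e] D(4) that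
    by (cases "k = j1") auto
  moreover have "?Z k \<inter> ?Z k' = {}" if "k \<in> J - {j0}" "k' \<in> J - {j0}" "k \<noteq> k'" for k k'
    using D(2)[of k k'] that by auto
  ultimately show ?thesis using D(1) by (simp add: budgeted_bundles_def)
qed

lemma budgeted_bundles_reduce_move:
  fixes w :: "nat \<Rightarrow> real"
  assumes B: "budgeted_bundles w a c J Z b" and w: "\<And>x. 0 \<le> w x" "\<And>x. w x \<le> 1 - a" and "0 \<le> a"
    and j0: "j0 \<in> J" "Z j0 = {}" and j1: "j1 \<in> J" "3 \<le> card (Z j1)"
  obtains J' Z' b' where "budgeted_bundles w a c J' Z' b'" "bundles_measure J' Z' < bundles_measure J Z"
    "matchable w c (\<Union>j\<in>J'. Z' j) (2 * sum b' J') \<Longrightarrow> matchable w c (\<Union>j\<in>J. Z j) (2 * sum b J)"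
proof
  note D = budgeted_bundlesD[OF B]
  define e where "e = Max (Z j1)"
  define Z' where "Z' = Z(j0 := {e}, j1 := Z j1 - {e})"
  have e_in: "e \<in> Z j1" using D(5)[OF j1(1)] j1(2) unfolding e_def by (intro Max_in) auto
  then have "j0 \<noteq> j1" using j0(2) by auto
  have U: "(\<Union>k\<in>J. Z' k) = (\<Union>k\<in>J. Z k)" unfolding Z'_def by (rule UN_move_to_empty[OF j0 j1(1) e_in])
  show "budgeted_bundles w a c J Z' b"
    unfolding Z'_def by (rule budgeted_bundles_move_Max[OF B w \<open>0 \<le> a\<close> j0 j1 e_def])
  have "card (Z j1 - {e}) > 0" using e_in D(5)[OF j1(1)] j1(2) by simp
  then have "Z j1 - {e} \<noteq> {}" by (simp add: card_gt_0_iff)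
  then have "Z' j1 \<noteq> {}" using \<open>j0 \<noteq> j1\<close> by (simp add: Z'_def)
  then have "{k\<in>J. Z' k = {}} \<subseteq> {k\<in>J. Z k = {}} - {j0}" by (auto simp: Z'_def split: if_splits)
  then have "card {k\<in>J. Z' k = {}} \<le> card ({k\<in>J. Z k = {}} - {j0})"
    using D(1) by (intro card_mono) auto
  also have "\<dots> < card {k\<in>J. Z k = {}}" using D(1) j0 by (intro card_Diff1_less) auto
  finally show "bundles_measure J Z' < bundles_measure J Z" using U by simp
  show "matchable w c (\<Union>j\<in>J. Z' j) (2 * sum b J) \<Longrightarrow> matchable w c (\<Union>j\<in>J. Z j) (2 * sum b J)"
    using U by simp
qed

lemma budgeted_bundles_reduce_singleton:
  fixes w :: "nat \<Rightarrow> real"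
  assumes B: "budgeted_bundles w a c J Z b" and w: "\<And>x. 0 \<le> w x" "\<And>x. w x \<le> 1 - a"
    and "0 \<le> a" "c \<le> 1" and j0: "j0 \<in> J" "Z j0 = {g}" and j1: "j1 \<in> J" "3 \<le> card (Z j1)"
  obtains J' Z' b' where "budgeted_bundles w a c J' Z' b'" "bundles_measure J' Z' < bundles_measure J Z"
    "matchable w c (\<Union>j\<in>J'. Z' j) (2 * sum b' J') \<Longrightarrow> matchable w c (\<Union>j\<in>J. Z j) (2 * sum b J)"
proof
  note D = budgeted_bundlesD[OF B]
  define e where "e = Max (Z j1)"
  define b' where "b' = b(j1 := b j1 - max 0 (w e - a))"
  let ?Z' = "Z(j1 := Z j1 - {e})" and ?U = "\<Union>k\<in>J - {j0}. (Z(j1 := Z j1 - {e})) k"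
  have e_in: "e \<in> Z j1" using D(5)[OF j1(1)] j1(2) unfolding e_def by (intro Max_in) auto
  have "j0 \<noteq> j1" using j0(2) j1(2) by auto
  then have "g \<noteq> e" using D(2)[OF j0(1) j1(1)] j0(2) e_in by blast
  note U = UN_remove_singleton_and_element[OF D(2) j0 j1(1) e_in \<open>j0 \<noteq> j1\<close>]
  show "budgeted_bundles w a c (J - {j0}) ?Z' b'"
    unfolding b'_def by (rule budgeted_bundles_remove_singleton[OF B w(1) \<open>0 \<le> a\<close> j0 j1 e_def])
  have "finite ?U" using D(1,5) by (auto intro: finite_subset[of _ "Z _"])
  then have "card ?U + 2 = card (\<Union>k\<in>J. Z k)" using U \<open>g \<noteq> e\<close> by (simp del: fun_upd_apply)
  moreover have "card (Z j1 - {e}) > 0" using e_in D(5)[OF j1(1)] j1(2) by simp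
  then have "Z j1 - {e} \<noteq> {}" by (simp add: card_gt_0_iff)
  then have "Z k = {}" if "?Z' k = {}" for k using that by (cases "k = j1") auto
  then have "{k\<in>J - {j0}. ?Z' k = {}} \<subseteq> {k\<in>J. Z k = {}}" by blast
  then have "card {k\<in>J - {j0}. ?Z' k = {}} \<le> card {k\<in>J. Z k = {}}" using D(1) by (intro card_mono) auto
  ultimately show "bundles_measure (J - {j0}) ?Z' < bundles_measure J Z" by linarith
  assume M: "matchable w c ?U (2 * sum b' (J - {j0}))"
  have "max (w g + w e) c \<le> 1 + max 0 (w e - a)" using w(2)[of g] \<open>c \<le> 1\<close> by auto
  note matchable_add_pair[OF M \<open>finite ?U\<close> U(2,3) \<open>g \<noteq> e\<close> this]
  moreover have "sum b' (J - {j0}) = sum b (J - {j0}) - max 0 (w e - a)"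
    using sum.remove[of "J - {j0}" j1 b'] sum.remove[of "J - {j0}" j1 b] D(1) j1(1) \<open>j0 \<noteq> j1\<close>
    by (simp add: b'_def)
  moreover have "b j0 = 1" using D(4)[OF j0(1)] j0(2) by (simp add: within_budget_def)
  ultimately show "matchable w c (\<Union>j\<in>J. Z j) (2 * sum b J)"
    using U(1) sum.remove[OF D(1) j0(1), of b] by (simp add: algebra_simps)
qed

lemma budgeted_bundles_cases:
  assumes B: "budgeted_bundles w a c J Z b" and "J \<noteq> {}"
  obtains j where "j \<in> J" "card (Z j) = 2"
    | j0 j1 where "j0 \<in> J" "j1 \<in> J" "card (Z j0) \<le> 1" "3 \<le> card (Z j1)"
proof (cases "\<exists>j\<in>J. card (Z j) = 2")
  case True then show ?thesis using that(1) by blast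
next
  case no_pair: False
  have sum: "(\<Sum>j\<in>J. card (Z j)) = 2 * card J" by (rule budgeted_bundles_sum_card[OF B])
  have "card J > 0" using budgeted_bundlesD(1)[OF B] \<open>J \<noteq> {}\<close> by auto
  obtain j0 where "j0 \<in> J" "card (Z j0) \<le> 1"
  proof -
    have "\<not> (\<forall>j\<in>J. 3 \<le> card (Z j))"
    proof
      assume "\<forall>j\<in>J. 3 \<le> card (Z j)"
      then have "(\<Sum>j\<in>J. 3) \<le> (\<Sum>j\<in>J. card (Z j))" by (intro sum_mono) auto
      then show False using sum \<open>card J > 0\<close> by simp
    qed
    then show thesis using no_pair that by force
  qed
  moreover obtain j1 where "j1 \<in> J" "3 \<le> card (Z j1)"
  proof -
    have "\<not> (\<forall>j\<in>J. card (Z j) \<le> 1)"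
    proof
      assume "\<forall>j\<in>J. card (Z j) \<le> 1"
      then have "(\<Sum>j\<in>J. card (Z j)) \<le> (\<Sum>j\<in>J. 1)" by (intro sum_mono) auto
      then show False using sum \<open>card J > 0\<close> by simp
    qed
    then show thesis using no_pair that by force
  qed
  ultimately show ?thesis using that(2) by blast
qed

lemma budgeted_bundles_reduce:
  fixes w :: "nat \<Rightarrow> real"
  assumes B: "budgeted_bundles w a c J Z b" "J \<noteq> {}"
    and w: "\<And>x. 0 \<le> w x" "\<And>x. w x \<le> 1 - a" and "0 \<le> a" "c \<le> 1"
  obtains J' Z' b' where "budgeted_bundles w a c J' Z' b'" "bundles_measure J' Z' < bundles_measure J Z"
    "matchable w c (\<Union>j\<in>J'. Z' j) (2 * sum b' J') \<Longrightarrow> matchable w c (\<Union>j\<in>J. Z j) (2 * sum b J)"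
  using B
proof (cases rule: budgeted_bundles_cases)
  case (1 j)
  then show ?thesis using budgeted_bundles_reduce_pair[OF B(1)] that by blast
next
  case (2 j0 j1)
  show ?thesis
  proof (cases "Z j0 = {}")
    case True
    then show ?thesis using budgeted_bundles_reduce_move[OF B(1) w \<open>0 \<le> a\<close> 2(1) _ 2(2,4)] that by blast
  next
    case False
    then have "card (Z j0) = 1" using 2(3) budgeted_bundlesD(5)[OF B(1) 2(1)] by (simp add: le_Suc_eq)
    then obtain g where "Z j0 = {g}" by (rule card_1_singletonE)
    then show ?thesis
      using budgeted_bundles_reduce_singleton[OF B(1) w \<open>0 \<le> a\<close> \<open>c \<le> 1\<close> 2(1) _ 2(2,4)] that by blast
  qed
qed

text \<open>Greedy pairing: a bundle of two elements is paired internally within its budget; a singleton is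
  paired with the largest element of a bundle of three or more, paid for by its budget 1 and the
  excess of that element; an empty bundle first takes over such an element.\<close>
lemma budgeted_bundles_matchable:
  fixes w :: "nat \<Rightarrow> real"
  assumes w: "\<And>x. 0 \<le> w x" "\<And>x. w x \<le> 1 - a" and "0 \<le> a" "c \<le> 1"
  shows "budgeted_bundles w a c J Z b \<Longrightarrow> matchable w c (\<Union>j\<in>J. Z j) (2 * sum b J)"
proof (induction "bundles_measure J Z" arbitrary: J Z b rule: less_induct)
  case less
  show ?case
  proof (cases "J = {}")
    case True then show ?thesis
      using perfect_matching_empty by (auto simp: matchable_def pairing_cost_def)
  next
    case False
    obtain J' Z' b' where "budgeted_bundles w a c J' Z' b'" "bundles_measure J' Z' < bundles_measure J Z"
      "matchable w c (\<Union>j\<in>J'. Z' j) (2 * sum b' J') \<Longrightarrow> matchable w c (\<Union>j\<in>J. Z j) (2 * sum b J)"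
      using budgeted_bundles_reduce[OF less.prems False w \<open>0 \<le> a\<close> \<open>c \<le> 1\<close>] by blast
    then show ?thesis using less.hyps by blast
  qed
qed

section \<open>Agents outside N1\<close>

lemma pigeonhole_three:
  assumes "f \<in> A \<rightarrow> B" "finite A" "finite B" "2 * card B < card A"
  obtains y where "y \<in> B" "3 \<le> card (f -` {y} \<inter> A)"
proof -
  have "A \<noteq> {}" using assms(4) by auto
  then have "B \<noteq> {}" using assms(1) by (auto simp: Pi_iff)
  then obtain y where "y \<in> B" "card A \<le> card (f -` {y} \<inter> A) * card B"
    using pigeonhole_card[OF assms(1-3)] by blast
  moreover have "\<not> card (f -` {y} \<inter> A) \<le> 2"
  proof
    assume "card (f -` {y} \<inter> A) \<le> 2"
    then have "card (f -` {y} \<inter> A) * card B \<le> 2 * card B" by (rule mult_right_mono) simp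
    with calculation(2) assms(4) show False by linarith
  qed
  ultimately show thesis using that by simp
qed

text \<open>Pigeonhole: the \<open>2(n-k)+1\<close> elements \<open>k+1..b\<close> carry only the \<open>n - k\<close> labels unused by \<open>1..k\<close>.\<close>
lemma label_shared_by_three:
  fixes part :: "nat \<Rightarrow> nat"
  assumes sep: "\<And>g h. g \<in> {1..k} \<Longrightarrow> h \<in> {1..b} \<Longrightarrow> g \<noteq> h \<Longrightarrow> part g \<noteq> part h"
    and range: "part ` {1..b} \<subseteq> {1..n}" and "k \<le> n" "b = 2*n - k + 1"
  obtains j where "j \<in> {1..n}" "3 \<le> card (part -` {j} \<inter> {k+1..b})"
proof -
  have "{1..k} \<subseteq> {1..b}" using assms(3,4) by auto
  let ?B = "{1..n} - part ` {1..k}"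
  have "inj_on part {1..k}" using sep \<open>{1..k} \<subseteq> {1..b}\<close> by (intro inj_onI) force
  then have "card (part ` {1..k}) = k" by (simp add: card_image)
  moreover have "part ` {1..k} \<subseteq> {1..n}"
    by (rule subset_trans[OF image_mono[OF \<open>{1..k} \<subseteq> {1..b}\<close>] range])
  ultimately have "card ?B = n - k" by (simp add: card_Diff_subset finite_subset)
  then have "2 * card ?B < card {k+1..b}" using assms(3,4) by simp
  moreover have "part \<in> {k+1..b} \<rightarrow> ?B"
  proof
    fix h assume h: "h \<in> {k+1..b}"
    then have "part h \<noteq> part g" if "g \<in> {1..k}" for g using sep[OF that, of h] that by auto
    then have "part h \<notin> part ` {1..k}" by blast
    moreover have "part h \<in> {1..n}" using subsetD[OF range imageI[of h "{1..b}" part]] h by simp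
    ultimately show "part h \<in> ?B" by blast
  qed
  ultimately obtain j where "j \<in> ?B" "3 \<le> card (part -` {j} \<inter> {k+1..b})"
    using pigeonhole_three[of part "{k+1..b}" ?B] by auto
  then show thesis using that by blast
qed

text \<open>If the bag \<open>{k, 2n - k + 1}\<close> is worth more than an MMS bundle, no MMS bundle contains two of the
  goods \<open>1..k\<close>, nor one of them together with one of \<open>k+1..2n-k+1\<close>.\<close>
lemma heavy_initbag_third:
  assumes ad: "additive_instance n m v" and ord: "ordered n m v" and nz: "normalized n m v"
    and i: "i \<in> {1..n}" and k: "k \<in> {1..n}" and heavy: "val m v i (initbag n k) > 1"
  shows "3 * good_value m v i (2*n - k + 1) \<le> 1"
proof (cases "2*n - k + 1 \<le> m")
  case False then show ?thesis by (simp add: good_value_def)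
next
  case True
  define b where "b = 2*n - k + 1"
  let ?W = "good_value m v i"
  have kb: "k < b" "b \<le> m" using k True unfolding b_def by auto
  have Wkb: "?W k + ?W b > 1" using heavy val_initbag[OF k] unfolding b_def by simp
  obtain P where P: "is_partition n {1..m} P" "\<And>j. j \<in> {1..n} \<Longrightarrow> val m v i (P j) = 1"
    using normalized_partition[OF nz i] by metis
  obtain part where part: "\<And>g. g \<in> {1..m} \<Longrightarrow> part g \<in> {1..n} \<and> g \<in> P (part g)"
    using partition_choice[OF P(1)] by metis
  have bundle_le: "val m v i S \<le> 1" if "j \<in> {1..n}" "S \<subseteq> P j" for j S
    using val_le_bundle[OF ad i P(2)[OF that(1)]] that(2) by blast
  have sep: "part g \<noteq> part h" if "g \<in> {1..k}" "h \<in> {1..b}" "g \<noteq> h" for g h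
  proof
    assume "part g = part h"
    moreover have "g \<in> P (part g)" "h \<in> P (part h)" "part g \<in> {1..n}" using part that kb by auto
    ultimately have "val m v i {g, h} \<le> 1" by (intro bundle_le[of "part g"]) auto
    moreover have "?W k \<le> ?W g" "?W b \<le> ?W h" using that by (auto intro: good_value_antimono[OF ad ord i])
    ultimately show False using Wkb val_pair[OF that(3)] by simp
  qed
  have range: "part ` {1..b} \<subseteq> {1..n}" using part kb by auto
  have "k \<le> n" using k by simp
  obtain j where j: "j \<in> {1..n}" "3 \<le> card (part -` {j} \<inter> {k+1..b})"
    using label_shared_by_three[OF sep range \<open>k \<le> n\<close> b_def] by blast
  let ?F = "part -` {j} \<inter> {k+1..b}"
  have "?F \<subseteq> P j" using part kb by auto
  have "3 * ?W b \<le> card ?F * ?W b"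
    using j(2) good_value_nonneg[OF ad i] by (intro mult_right_mono) auto
  also have "\<dots> \<le> sum ?W ?F"
    using sum_mono[of ?F "\<lambda>_. ?W b" ?W] good_value_antimono[OF ad ord i] by auto
  also have "\<dots> = val m v i ?F" by (simp add: val_eq_sum_good_value)
  also have "\<dots> \<le> 1" using bundle_le[of j ?F] j(1) \<open>?F \<subseteq> P j\<close> by blast
  finally show ?thesis unfolding b_def .
qed

lemma N2_val_2n1_less:
  assumes oni: "ONI \<delta> n m v" and i: "i \<in> {1..n}" and "i \<notin> N1 n m v"
  shows "val m v i {2*n+1} < 1/12 + \<delta>"
proof -
  have ad: "additive_instance n m v" and ord: "ordered n m v" and nz: "normalized n m v"
    and irr: "irreducible n m v (3/4 + \<delta>)" using oni unfolding ONI_def by auto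
  let ?W = "good_value m v i"
  obtain k where k: "k \<in> {1..n}" "val m v i (initbag n k) > 1"
    using assms(3) i unfolding N1_def by force
  have "?W k + ?W (2*n - k + 1) > 1" "3 * ?W (2*n - k + 1) \<le> 1"
    using k val_initbag[OF k(1)] heavy_initbag_third[OF ad ord nz i k] by simp_all
  moreover have "?W k \<le> ?W 1" using k(1) by (intro good_value_antimono[OF ad ord i]) auto
  moreover have "val m v i {1, 2*n+1} < 3/4 + \<delta>" using irr i unfolding irreducible_def by blast
  moreover have "(1::nat) \<noteq> 2*n+1" using i by simp
  ultimately show ?thesis using val_pair[of 1 "2*n+1" m v i] val_singleton[of m v i "2*n+1"] by linarith
qed

lemma padded_partition:
  assumes P: "is_partition n {1..m} P" and "1 \<le> n"
    and Z_def: "Z = (\<lambda>j. P j \<inter> {1..2*n} \<union> (if j = 1 then {m+1..2*n} else {}))"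
  shows "(\<Union>j\<in>{1..n}. Z j) = {1..2*n}"
    and "\<And>j j'. j \<in> {1..n} \<Longrightarrow> j' \<in> {1..n} \<Longrightarrow> j \<noteq> j' \<Longrightarrow> Z j \<inter> Z j' = {}"
    and "\<And>j. j \<in> {1..n} \<Longrightarrow> Z j \<inter> {1..m} \<subseteq> P j"
proof -
  have cover: "(\<Union>j\<in>{1..n}. P j) = {1..m}"
    and disj: "\<And>j j'. j \<in> {1..n} \<Longrightarrow> j' \<in> {1..n} \<Longrightarrow> j \<noteq> j' \<Longrightarrow> P j \<inter> P j' = {}"
    using P unfolding is_partition_def by blast+
  show "(\<Union>j\<in>{1..n}. Z j) = {1..2*n}"
  proof (intro equalityI subsetI)
    fix g assume g: "g \<in> {1..2*n}"
    show "g \<in> (\<Union>j\<in>{1..n}. Z j)"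
    proof (cases "g \<le> m")
      case True
      with g have "g \<in> (\<Union>j\<in>{1..n}. P j)" unfolding cover by simp
      then obtain j where "j \<in> {1..n}" "g \<in> P j" by blast
      then show ?thesis using g unfolding Z_def by blast
    next
      case False then show ?thesis using g \<open>1 \<le> n\<close> unfolding Z_def by force
    qed
  qed (auto simp: Z_def split: if_splits)
  show "Z j \<inter> Z j' = {}" if "j \<in> {1..n}" "j' \<in> {1..n}" "j \<noteq> j'" for j j'
  proof -
    have "P j \<subseteq> {1..m}" "P j' \<subseteq> {1..m}" using cover that(1,2) by blast+
    then show ?thesis using disj[OF that] that(3) unfolding Z_def by auto
  qed
  show "Z j \<inter> {1..m} \<subseteq> P j" if "j \<in> {1..n}" for j unfolding Z_def by auto
qed

text \<open>The witness: the MMS bundles restricted to the goods \<open>1..2n\<close>, the first one padded with the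
  dummy goods \<open>m+1..2n\<close>.\<close>
lemma MMS_partition_budgeted:
  fixes w :: "nat \<Rightarrow> real"
  assumes ad: "additive_instance n m v" and nz: "normalized n m v" and i: "i \<in> {1..n}"
    and w: "\<And>g. 0 \<le> w g" "antimono w" "\<And>g. 1 \<le> g \<Longrightarrow> w g = good_value m v i g"
    and a: "0 \<le> a" "a \<le> 1/4" and c: "c + max (1/3 - a) (1 - 4*a) \<le> 1"
  obtains Z where "budgeted_bundles w a c {1..n} Z (\<lambda>_. 1)" "(\<Union>j\<in>{1..n}. Z j) = {1..2*n}"
proof -
  obtain P where P: "is_partition n {1..m} P" "\<And>j. j \<in> {1..n} \<Longrightarrow> val m v i (P j) = 1"
    using normalized_partition[OF nz i] by metis
  define Z where "Z = (\<lambda>j. P j \<inter> {1..2*n} \<union> (if j = 1 then {m+1..2*n} else {}))"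
  have "1 \<le> n" using i by simp
  note Z = padded_partition[OF P(1) this Z_def]
  have "within_budget w a c (Z j) 1" if j: "j \<in> {1..n}" for j
  proof -
    have Zj: "Z j \<subseteq> {1..2*n}" using Z(1) j by blast
    then have fin: "finite (Z j)" by (rule finite_subset) simp
    have "sum w (Z j) = val m v i (Z j)"
      using Zj by (auto simp: val_eq_sum_good_value[OF fin] w(3) intro!: sum.cong)
    also have "\<dots> \<le> 1" using val_le_bundle[OF ad i P(2)[OF j] Z(3)[OF j]] .
    finally have "sum w (Z j) \<le> 1" .
    then have "excess w a (Z j) \<le> max (1/3 - a) (1 - 4*a)" using excess_le[OF fin w(1,2) _ a] by blast
    then show ?thesis using fin \<open>sum w (Z j) \<le> 1\<close> c by (simp add: within_budget_def)
  qed
  then have "budgeted_bundles w a c {1..n} Z (\<lambda>_. 1)"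
    using Z(1,2) by (simp add: budgeted_bundles_def)
  then show thesis using that Z(1) by blast
qed

lemma sum_initbag_nested:
  "(\<Sum>k\<in>{1..n}. f (val m v i (initbag n k)))
     = (\<Sum>t<n. f (good_value m v i (1+t) + good_value m v i (1+2*n-1-t)))"
proof -
  have "(\<Sum>k\<in>{1..n}. f (val m v i (initbag n k))) = (\<Sum>t<n. f (val m v i (initbag n (Suc t))))"
    by (simp add: sum.atLeast1_atMost_eq)
  also have "\<dots> = (\<Sum>t<n. f (good_value m v i (1+t) + good_value m v i (1+2*n-1-t)))"
  proof (rule sum.cong)
    fix t assume "t \<in> {..<n}"
    then have "2*n - Suc t + 1 = 1+2*n-1-t" by auto
    with \<open>t \<in> {..<n}\<close> show "f (val m v i (initbag n (Suc t))) = f (good_value m v i (1+t) + good_value m v i (1+2*n-1-t))"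
      using val_initbag[of "Suc t" n m v i] by simp
  qed simp
  finally show ?thesis .
qed

lemma N2_capped_sum_le:
  assumes d: "0 \<le> \<delta>" "\<delta> \<le> 0.011" and oni: "ONI \<delta> n m v" and i: "i \<in> {1..n}"
    and "i \<notin> N1 n m v"
  shows "(\<Sum>k\<in>{1..n}. max (val m v i (initbag n k)) (3/4 + \<delta> + val m v i {2*n+1})) \<le> n"
proof -
  have ad: "additive_instance n m v" and ord: "ordered n m v" and nz: "normalized n m v"
    and irr: "irreducible n m v (3/4 + \<delta>)" using oni unfolding ONI_def by auto
  define w where "w = (\<lambda>g. good_value m v i (max 1 g))"
  define a :: real where "a = 1/4 - \<delta>"
  define c where "c = 3/4 + \<delta> + val m v i {2*n+1}"
  have w_eq: "\<And>g. 1 \<le> g \<Longrightarrow> w g = good_value m v i g" by (simp add: w_def max_def)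
  have w_nonneg: "\<And>g. 0 \<le> w g" using good_value_nonneg[OF ad i] by (simp add: w_def)
  have w_anti: "antimono w"
    unfolding w_def by (intro antimonoI good_value_antimono[OF ad ord i]) auto
  have "val m v i {1} < 3/4 + \<delta>" using irr i unfolding irreducible_def by blast
  then have w0: "w 0 < 1 - a" unfolding a_def w_def by simp
  have w_le: "w g \<le> 1 - a" for g
  proof -
    have "w g \<le> w 0" using w_anti by (simp add: antimono_def)
    then show ?thesis using w0 by linarith
  qed
  have x: "val m v i {2*n+1} < 1/12 + \<delta>" by (rule N2_val_2n1_less[OF oni i \<open>i \<notin> N1 n m v\<close>])
  have budget: "c + max (1/3 - a) (1 - 4*a) \<le> 1" and "c \<le> 1"
    using x d unfolding a_def c_def by (auto simp: max_def)
  have a: "0 \<le> a" "a \<le> 1/4" using d unfolding a_def by auto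
  obtain Z where Z: "budgeted_bundles w a c {1..n} Z (\<lambda>_. 1)" "(\<Union>j\<in>{1..n}. Z j) = {1..2*n}"
    using MMS_partition_budgeted[OF ad nz i w_nonneg w_anti w_eq a budget] by blast
  have "matchable w c {1..<1+2*n} (2 * real n)"
    using budgeted_bundles_matchable[OF w_nonneg w_le a(1) \<open>c \<le> 1\<close> Z(1)] Z(2)
    by (simp add: atLeastLessThanSuc_atLeastAtMost)
  then obtain \<sigma> where \<sigma>: "perfect_matching {1..<1+2*n} \<sigma>" "pairing_cost w c {1..<1+2*n} \<sigma> \<le> 2 * real n"
    unfolding matchable_def by blast
  have "(\<Sum>k\<in>{1..n}. max (val m v i (initbag n k)) c) = (\<Sum>t<n. max (w (1+t) + w (1+2*n-1-t)) c)"
    unfolding sum_initbag_nested[of "\<lambda>x. max x c"] using w_eq by simp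
  also have "2 * \<dots> \<le> 2 * real n"
    using nested_pairing_cost_le[OF w_anti \<sigma>(1), where c = c] \<sigma>(2) by linarith
  finally show ?thesis unfolding c_def by simp
qed

section \<open>Invariants of approxMMS1\<close>

definition inv_phase :: "nat \<Rightarrow> st \<Rightarrow> bool" where
  "inv_phase n s \<longleftrightarrow> (ph s = 1 \<and> cur s = None \<and> bag s = initbag n) \<or> ph s = 2"

definition inv_current :: "nat \<Rightarrow> st \<Rightarrow> bool" where
  "inv_current n s \<longleftrightarrow> (\<forall>k. cur s = Some k \<longrightarrow> k \<in> {1..n} \<and> bag_free s k)"

definition inv_assignment :: "nat \<Rightarrow> st \<Rightarrow> bool" where
  "inv_assignment n s \<longleftrightarrow> (\<forall>i k. asg s i = Some k \<longrightarrow> i \<in> {1..n} \<and> k \<in> {1..n}) \<and>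
     (\<forall>i j k. asg s i = Some k \<longrightarrow> asg s j = Some k \<longrightarrow> i = j)"

definition inv_bags :: "nat \<Rightarrow> nat \<Rightarrow> st \<Rightarrow> bool" where
  "inv_bags n m s \<longleftrightarrow> (\<forall>k. initbag n k \<subseteq> bag s k \<and> bag s k - initbag n k \<subseteq> {2*n+1..m}) \<and>
     (\<forall>k\<in>{1..n}. \<forall>k'\<in>{1..n}. k \<noteq> k' \<longrightarrow> bag s k \<inter> bag s k' = {})"

definition inv_modified :: "nat \<Rightarrow> st \<Rightarrow> bool" where
  "inv_modified n s \<longleftrightarrow>
     (\<forall>k. bag s k \<noteq> initbag n k \<longrightarrow> k \<in> {1..n} \<and> (\<not> bag_free s k \<or> cur s = Some k))"

definition inv_assigned_value :: "real \<Rightarrow> nat \<Rightarrow> (nat \<Rightarrow> nat \<Rightarrow> real) \<Rightarrow> st \<Rightarrow> bool" where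
  "inv_assigned_value \<delta> m v s \<longleftrightarrow> (\<forall>i k. asg s i = Some k \<longrightarrow> val m v i (bag s k) \<ge> 3/4 + \<delta>)"

definition inv_unwanted :: "real \<Rightarrow> nat \<Rightarrow> nat \<Rightarrow> (nat \<Rightarrow> nat \<Rightarrow> real) \<Rightarrow> st \<Rightarrow> bool" where
  "inv_unwanted \<delta> n m v s \<longleftrightarrow> (\<forall>j\<in>{1..n}. agent_free s j \<longrightarrow>
     (ph s = 2 \<longrightarrow> (\<forall>k\<in>{1..n}. bag_free s k \<longrightarrow> bag s k = initbag n k \<longrightarrow> val m v j (bag s k) < 3/4 + \<delta>)) \<and>
     (\<forall>k\<in>{1..n}. bag s k \<noteq> initbag n k \<longrightarrow> val m v j (bag s k) < 3/4 + \<delta> + val m v j {2*n+1}))"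

definition inv_N11_first :: "real \<Rightarrow> nat \<Rightarrow> nat \<Rightarrow> (nat \<Rightarrow> nat \<Rightarrow> real) \<Rightarrow> st \<Rightarrow> bool" where
  "inv_N11_first \<delta> n m v s \<longleftrightarrow> (\<forall>i k. asg s i = Some k \<longrightarrow> i \<notin> N11 \<delta> n m v \<longrightarrow>
     (\<forall>j\<in>N11 \<delta> n m v. agent_free s j \<longrightarrow> val m v j (bag s k) < 3/4 + \<delta>))"

definition alg_inv :: "real \<Rightarrow> nat \<Rightarrow> nat \<Rightarrow> (nat \<Rightarrow> nat \<Rightarrow> real) \<Rightarrow> st \<Rightarrow> bool" where
  "alg_inv \<delta> n m v s \<longleftrightarrow> inv_phase n s \<and> inv_current n s \<and> inv_assignment n s \<and> inv_bags n m s \<and>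
     inv_modified n s \<and> inv_assigned_value \<delta> m v s \<and> inv_unwanted \<delta> n m v s \<and> inv_N11_first \<delta> n m v s"

lemmas alg_inv_defs = alg_inv_def inv_phase_def inv_current_def inv_assignment_def inv_bags_def
  inv_modified_def inv_assigned_value_def inv_unwanted_def inv_N11_first_def

lemma alg_invD:
  assumes "alg_inv \<delta> n m v s"
  shows "inv_phase n s" "inv_current n s" "inv_assignment n s" "inv_bags n m s" "inv_modified n s"
    "inv_assigned_value \<delta> m v s" "inv_unwanted \<delta> n m v s" "inv_N11_first \<delta> n m v s"
  using assms unfolding alg_inv_def by simp_all

lemma alg_inv_init: "alg_inv \<delta> n m v (init_st n)"
  by (auto simp: alg_inv_defs init_st_def initbag_disjoint)

lemma asg_assign: "asg (s\<lparr>asg := (asg s)(i := Some k), cur := c\<rparr>) j = (if j = i then Some k else asg s j)"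
  by simp

lemma agent_free_assign: "agent_free (s\<lparr>asg := (asg s)(i := Some k), cur := c\<rparr>) j \<longleftrightarrow> j \<noteq> i \<and> agent_free s j"
  unfolding agent_free_def asg_assign by simp

lemma bag_free_assign:
  "agent_free s i \<Longrightarrow> bag_free (s\<lparr>asg := (asg s)(i := Some k), cur := c\<rparr>) k' \<longleftrightarrow> k' \<noteq> k \<and> bag_free s k'"
  unfolding agent_free_def bag_free_def asg_assign by force

lemma inv_N11_first_assign:
  assumes I: "inv_N11_first \<delta> n m v s" and i: "agent_free s i"
    and N11: "i \<in> N11 \<delta> n m v \<or> (\<forall>j\<in>N11 \<delta> n m v. agent_free s j \<longrightarrow> val m v j (bag s k) < 3/4 + \<delta>)"
  shows "inv_N11_first \<delta> n m v (s\<lparr>asg := (asg s)(i := Some k), cur := None\<rparr>)" (is "inv_N11_first _ _ _ _ ?s")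
  unfolding inv_N11_first_def
proof (intro allI impI ballI)
  fix i' k' j assume a: "asg ?s i' = Some k'" "i' \<notin> N11 \<delta> n m v" "j \<in> N11 \<delta> n m v" "agent_free ?s j"
  note simps = asg_assign agent_free_assign bag_free_assign[OF i]
  show "val m v j (bag ?s k') < 3/4 + \<delta>"
  proof (cases "i' = i")
    case True then show ?thesis using a N11 by (simp add: simps)
  next
    case False
    then have "asg s i' = Some k'" "agent_free s j" using a(1,4) by (simp_all add: simps)
    then show ?thesis using I a(2,3) unfolding inv_N11_first_def by simp
  qed
qed

lemma alg_inv_assign:
  assumes I: "alg_inv \<delta> n m v s" and k: "k \<in> {1..n}" "bag_free s k"
    and mg: "may_get \<delta> n m v s i k" and c: "ph s = 1 \<or> cur s = Some k"
  shows "alg_inv \<delta> n m v (s\<lparr>asg := (asg s)(i := Some k), cur := None\<rparr>)" (is "alg_inv _ _ _ _ ?s")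
proof -
  note I' = alg_invD[OF I]
  have i: "i \<in> {1..n}" "agent_free s i" "val m v i (bag s k) \<ge> 3/4 + \<delta>"
    using mg by (auto simp: may_get_def)
  have N11: "i \<in> N11 \<delta> n m v \<or> (\<forall>j\<in>N11 \<delta> n m v. agent_free s j \<longrightarrow> val m v j (bag s k) < 3/4 + \<delta>)"
    using mg by (auto simp: may_get_def)
  have not_k: "asg s j \<noteq> Some k" for j using k(2) by (simp add: bag_free_def)
  note simps = asg_assign agent_free_assign bag_free_assign[OF i(2)]
  have "inv_phase n ?s" using I'(1) by (auto simp: inv_phase_def)
  moreover have "inv_current n ?s" by (simp add: inv_current_def)
  moreover have "inv_assignment n ?s"
    using I'(3) i(1) k(1) not_k unfolding inv_assignment_def simps by force
  moreover have "inv_bags n m ?s" using I'(4) by (simp add: inv_bags_def)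
  moreover have "inv_modified n ?s"
  proof -
    have "\<not> bag_free ?s k'" if "bag s k' \<noteq> initbag n k'" for k'
      using c that I'(1,5) unfolding simps by (auto simp: inv_phase_def inv_modified_def)
    then show ?thesis using I'(5) unfolding inv_modified_def by simp
  qed
  moreover have "inv_assigned_value \<delta> m v ?s"
    using I'(6) i(3) unfolding inv_assigned_value_def simps by simp
  moreover have "inv_unwanted \<delta> n m v ?s" using I'(7) unfolding inv_unwanted_def simps by simp
  moreover have "inv_N11_first \<delta> n m v ?s" by (rule inv_N11_first_assign[OF I'(8) i(2) N11])
  ultimately show ?thesis unfolding alg_inv_def by blast
qed

lemma alg_inv_end_phase1:
  assumes I: "alg_inv \<delta> n m v s" and "ph s = 1"
    and unwanted: "\<not> (\<exists>k\<in>{1..n}. bag_free s k \<and> someone_wants \<delta> n m v s k)"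
  shows "alg_inv \<delta> n m v (s\<lparr>ph := 2\<rparr>)"
proof -
  have "cur s = None" "bag s = initbag n" using alg_invD(1)[OF I] \<open>ph s = 1\<close> by (auto simp: inv_phase_def)
  have "val m v j (bag s k) < 3/4 + \<delta>"
    if "j \<in> {1..n}" "agent_free s j" "k \<in> {1..n}" "bag_free s k" for j k
    using unwanted that by (force simp: someone_wants_def)
  then have "inv_unwanted \<delta> n m v (s\<lparr>ph := 2\<rparr>)"
    using \<open>bag s = initbag n\<close> by (simp add: inv_unwanted_def agent_free_def bag_free_def)
  then show ?thesis using I \<open>cur s = None\<close>
    by (simp add: alg_inv_defs agent_free_def bag_free_def)
qed

lemma alg_inv_pick:
  assumes "alg_inv \<delta> n m v s" "ph s = 2" "cur s = None" "k \<in> {1..n}" "bag_free s k"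
  shows "alg_inv \<delta> n m v (s\<lparr>cur := Some k\<rparr>)"
  using assms by (auto simp: alg_inv_defs agent_free_def bag_free_def)

lemma alg_inv_add:
  assumes I: "alg_inv \<delta> n m v s" and ord: "ordered n m v" and p: "ph s = 2" and c: "cur s = Some k"
    and unwanted: "\<not> someone_wants \<delta> n m v s k"
    and g: "g \<in> {1..m}" "g \<notin> {1..2*n}" "g \<notin> used n s"
  shows "alg_inv \<delta> n m v (s\<lparr>bag := (bag s)(k := insert g (bag s k))\<rparr>)" (is "alg_inv _ _ _ _ ?s")
proof -
  have k: "k \<in> {1..n}" "bag_free s k" using I c by (auto simp: alg_inv_defs)
  have g_notin: "g \<notin> bag s k'" if "k' \<in> {1..n}" for k' using g(3) that by (auto simp: used_def)
  have g_new: "g \<notin> initbag n k'" if "k' \<in> {1..n}" for k' using g(2) initbag_subset[OF that] by blast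
  have not_k: "asg s j \<noteq> Some k" for j using k(2) by (simp add: bag_free_def)
  have "val m v j (bag ?s k) < 3/4 + \<delta> + val m v j {2*n+1}" if "j \<in> {1..n}" "agent_free s j" for j
  proof -
    have "val m v j (bag s k) < 3/4 + \<delta>" using unwanted that by (auto simp: someone_wants_def)
    moreover have "v j g \<le> v j (2*n+1)" "2*n+1 \<in> {1..m}"
      using ord that(1) g(1,2) unfolding ordered_def by auto
    ultimately show ?thesis using val_insert[OF g(1) g_notin[OF k(1)]] by (simp add: good_value_def)
  qed
  moreover have "bag ?s k \<noteq> initbag n k" using g_new[OF k(1)] by auto
  ultimately have "inv_unwanted \<delta> n m v ?s"
    using I k(1) unfolding alg_inv_defs by (auto simp: agent_free_def bag_free_def)
  moreover have "inv_bags n m ?s" using I g(1,2) g_notin unfolding alg_inv_defs by auto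
  ultimately show ?thesis
    using I p c k not_k unfolding alg_inv_defs by (auto simp: agent_free_def bag_free_def)
qed

lemma alg_inv_step:
  assumes "step \<delta> n m v s s'" "alg_inv \<delta> n m v s" "ordered n m v"
  shows "alg_inv \<delta> n m v s'"
  using assms(1)
proof cases
  case (phase1_assign k i)
  then have "cur s = None" using alg_invD(1)[OF assms(2)] by (auto simp: inv_phase_def)
  then have "s' = s\<lparr>asg := (asg s)(i := Some k), cur := None\<rparr>" using phase1_assign(1) by simp
  moreover have "alg_inv \<delta> n m v (s\<lparr>asg := (asg s)(i := Some k), cur := None\<rparr>)"
    using alg_inv_assign[OF assms(2) phase1_assign(3-5)] phase1_assign(2) by simp
  ultimately show ?thesis by simp
next
  case phase1_end then show ?thesis using alg_inv_end_phase1[OF assms(2)] by simp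
next
  case (phase2_pick k) then show ?thesis using alg_inv_pick[OF assms(2)] by simp
next
  case (phase2_add k g) then show ?thesis using alg_inv_add[OF assms(2,3)] by simp
next
  case (phase2_assign k i)
  then have "k \<in> {1..n}" "bag_free s k" using alg_invD(2)[OF assms(2)] by (auto simp: inv_current_def)
  then show ?thesis using alg_inv_assign[OF assms(2)] phase2_assign by simp
qed

lemma alg_inv_reachable:
  assumes "(step \<delta> n m v)\<^sup>*\<^sup>* (init_st n) s" "ordered n m v"
  shows "alg_inv \<delta> n m v s"
  using assms(1) by induction (auto intro: alg_inv_init alg_inv_step[OF _ _ assms(2)])

section \<open>Terminal states\<close>

lemma someone_wants_may_get:
  assumes "someone_wants \<delta> n m v s k"
  obtains i where "may_get \<delta> n m v s i k"
proof (cases "\<exists>j\<in>N11 \<delta> n m v. agent_free s j \<and> val m v j (bag s k) \<ge> 3/4 + \<delta>")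
  case True
  then obtain j where "j \<in> N11 \<delta> n m v" "agent_free s j" "val m v j (bag s k) \<ge> 3/4 + \<delta>" by blast
  moreover have "j \<in> {1..n}" using calculation(1) by (simp add: N11_def N1_def)
  ultimately show thesis using that unfolding may_get_def by blast
next
  case False
  then show thesis using assms that unfolding may_get_def someone_wants_def by blast
qed

lemma terminal_phase2:
  assumes "alg_inv \<delta> n m v s" "\<not> (\<exists>s'. step \<delta> n m v s s')"
  shows "ph s = 2"
proof (rule ccontr)
  assume "ph s \<noteq> 2"
  then have p: "ph s = 1" using alg_invD(1)[OF assms(1)] by (auto simp: inv_phase_def)
  show False
  proof (cases "\<exists>k\<in>{1..n}. bag_free s k \<and> someone_wants \<delta> n m v s k")
    case True
    then obtain k i where "k \<in> {1..n}" "bag_free s k" "may_get \<delta> n m v s i k"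
      using someone_wants_may_get by metis
    then show False using assms(2) step.phase1_assign[OF p] by blast
  next
    case False then show False using assms(2) step.phase1_end[OF p] by blast
  qed
qed

lemma all_bags_taken_finished:
  assumes I: "alg_inv \<delta> n m v s" and taken: "\<forall>k\<in>{1..n}. \<not> bag_free s k"
  shows "finished n s"
proof -
  let ?A = "{i\<in>{1..n}. asg s i \<noteq> None}"
  have inj: "\<forall>i j k. asg s i = Some k \<longrightarrow> asg s j = Some k \<longrightarrow> i = j"
    and range: "\<forall>i k. asg s i = Some k \<longrightarrow> i \<in> {1..n} \<and> k \<in> {1..n}"
    using alg_invD(3)[OF I] by (simp_all add: inv_assignment_def)
  have sub: "{1..n} \<subseteq> (\<lambda>i. the (asg s i)) ` ?A"
  proof
    fix k assume "k \<in> {1..n}"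
    then obtain i where "asg s i = Some k" using taken unfolding bag_free_def by blast
    then show "k \<in> (\<lambda>i. the (asg s i)) ` ?A" using range by force
  qed
  have "n \<le> card ((\<lambda>i. the (asg s i)) ` ?A)" using card_mono[OF _ sub] by simp
  also have "\<dots> \<le> card ?A" by (rule card_image_le) simp
  finally have "n \<le> card ?A" .
  moreover have "card ?A \<le> card {1..n}" by (rule card_mono) auto
  ultimately have "card ?A = card {1..n}" by simp
  then have "?A = {1..n}" by (intro card_subset_eq) auto
  then show ?thesis unfolding finished_def by blast
qed

lemma sum_bag_values:
  assumes I: "alg_inv \<delta> n m v s" and used: "\<forall>g\<in>{1..m}. g \<notin> {1..2*n} \<longrightarrow> g \<in> used n s"
    and nz: "normalized n m v" and i: "i \<in> {1..n}"
  shows "(\<Sum>k\<in>{1..n}. val m v i (bag s k)) = n"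
proof -
  have bags: "\<And>k. initbag n k \<subseteq> bag s k"
    and disj: "\<And>k k'. k \<in> {1..n} \<Longrightarrow> k' \<in> {1..n} \<Longrightarrow> k \<noteq> k' \<Longrightarrow> bag s k \<inter> bag s k' = {}"
    using alg_invD(4)[OF I] by (auto simp: inv_bags_def)
  have "{1..m} \<subseteq> (\<Union>k\<in>{1..n}. bag s k)"
  proof
    fix g assume g: "g \<in> {1..m}"
    show "g \<in> (\<Union>k\<in>{1..n}. bag s k)"
    proof (cases "g \<le> 2*n")
      case True
      then have "g \<in> (\<Union>k\<in>{1..n}. initbag n k)" using g UN_initbag[of n] by simp
      then show ?thesis using bags by blast
    next
      case False then show ?thesis using used g unfolding used_def by simp
    qed
  qed
  then have "(\<Union>k\<in>{1..n}. bag s k) \<inter> {1..m} = {1..m}" by blast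
  then have "val m v i (\<Union>k\<in>{1..n}. bag s k) = val m v i {1..m}" by (simp add: val_def)
  then show ?thesis using val_UN_disjoint[of "{1..n}" "bag s"] disj val_all_goods[OF nz i] by simp
qed

lemma val_2n1_bounds:
  assumes oni: "ONI \<delta> n m v" and i: "i \<in> {1..n}"
  shows "0 \<le> val m v i {2*n+1}" "val m v i {2*n+1} < (3/4 + \<delta>) / 3"
proof -
  have ad: "additive_instance n m v" and ord: "ordered n m v" and irr: "irreducible n m v (3/4 + \<delta>)"
    using oni unfolding ONI_def by auto
  let ?W = "good_value m v i"
  show "0 \<le> val m v i {2*n+1}" using good_value_nonneg[OF ad i] by simp
  define p where "p = 2*n - 1"
  have p: "2*n - 1 = p" "2*n = p + 1" "2*n + 1 = p + 2" "1 \<le> p" using i by (auto simp: p_def)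
  have "?W (p+2) \<le> ?W p" "?W (p+2) \<le> ?W (p+1)"
    using p(4) by (auto intro: good_value_antimono[OF ad ord i])
  moreover have "val m v i {p, p+1, p+2} = ?W p + ?W (p+1) + ?W (p+2)"
    by (simp add: val_eq_sum_good_value)
  moreover have "val m v i {2*n-1, 2*n, 2*n+1} < 3/4 + \<delta>"
    using irr i unfolding irreducible_def by blast
  then have "val m v i {p, p+1, p+2} < 3/4 + \<delta>" unfolding p(1) unfolding p(3) unfolding p(2) .
  ultimately show "val m v i {2*n+1} < (3/4 + \<delta>) / 3" unfolding p(3) by simp
qed

lemma N11_counting_contradiction:
  fixes f :: "nat \<Rightarrow> real"
  assumes sum: "(\<Sum>k\<in>{1..n}. f k) = n" and A: "A \<subseteq> {1..n}" and kc: "kc \<in> {1..n} - A"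
    and in_A: "\<And>k. k \<in> A \<Longrightarrow> f k \<le> 1 + 4*\<delta>/3"
    and not_in_A: "\<And>k. k \<in> {1..n} - A \<Longrightarrow> f k \<le> 3/4 + \<delta>" and "f kc < 3/4 + \<delta>"
    and card: "real (card A) + 1 \<le> real n * (1/4 - \<delta>) / (1/4 + \<delta>/3)" and "0 \<le> \<delta>"
  shows False
proof -
  let ?h = "\<lambda>k. if k \<in> A then 1 + 4*\<delta>/3 else 3/4 + \<delta>"
  have "real n < (\<Sum>k\<in>{1..n}. ?h k)"
    unfolding sum[symmetric] using in_A not_in_A kc \<open>f kc < 3/4 + \<delta>\<close> A
    by (intro sum_strict_mono_ex1) auto
  also have "\<dots> = card A * (1 + 4*\<delta>/3) + card ({1..n} - A) * (3/4 + \<delta>)"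
    using A by (simp add: sum.If_cases Int_absorb1 Int_absorb2 Diff_eq[symmetric])
  also have "\<dots> = n * (3/4 + \<delta>) + card A * (1/4 + \<delta>/3)"
  proof -
    have "card A \<le> n" using card_mono[OF _ A] by simp
    then have D: "real (card ({1..n} - A)) = real n - card A"
      using A by (simp add: card_Diff_subset finite_subset of_nat_diff)
    show ?thesis unfolding D by (simp add: field_simps)
  qed
  finally have lt: "real n < n * (3/4 + \<delta>) + card A * (1/4 + \<delta>/3)" .
  have pos: "0 < 1/4 + \<delta>/3" using \<open>0 \<le> \<delta>\<close> by simp
  have "(real (card A) + 1) * (1/4 + \<delta>/3) \<le> real n * (1/4 - \<delta>)"
    using card unfolding pos_le_divide_eq[OF pos] .
  moreover have "(real (card A) + 1) * (1/4 + \<delta>/3) = card A * (1/4 + \<delta>/3) + (1/4 + \<delta>/3)"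
    "real n * (3/4 + \<delta>) + real n * (1/4 - \<delta>) = real n" by (simp_all add: field_simps)
  ultimately show False using lt pos by linarith
qed

lemma card_Some_values_less:
  assumes "finite N" "x \<in> N" "f x = None"
  shows "card {k. \<exists>y\<in>N. f y = Some k} < card N"
proof -
  have "{k. \<exists>y\<in>N. f y = Some k} \<subseteq> (\<lambda>y. the (f y)) ` (N - {x})" using assms(3) by force
  then have "card {k. \<exists>y\<in>N. f y = Some k} \<le> card ((\<lambda>y. the (f y)) ` (N - {x}))"
    using assms(1) by (intro card_mono) auto
  also have "\<dots> \<le> card (N - {x})" using assms(1) by (intro card_image_le) auto
  also have "\<dots> < card N" by (rule card_Diff1_less[OF assms(1,2)])
  finally show ?thesis .
qed

lemma N11_agent_not_stuck:
  assumes I: "alg_inv \<delta> n m v s" and "0 \<le> \<delta>"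
    and card: "real (card (N11 \<delta> n m v)) \<le> real n * (1/4 - \<delta>) / (1/4 + \<delta>/3)"
    and i: "i \<in> N11 \<delta> n m v" "agent_free s i" and kc: "kc \<in> {1..n}" "bag_free s kc"
    and sum: "(\<Sum>k\<in>{1..n}. val m v i (bag s k)) = n"
    and free_bag: "\<And>k. k \<in> {1..n} \<Longrightarrow> bag_free s k \<Longrightarrow> val m v i (bag s k) < 3/4 + \<delta>"
    and modified: "\<And>k. k \<in> {1..n} \<Longrightarrow> bag s k \<noteq> initbag n k \<Longrightarrow>
        val m v i (bag s k) < 3/4 + \<delta> + val m v i {2*n+1}"
    and x: "val m v i {2*n+1} < (3/4 + \<delta>) / 3"
  shows False
proof -
  define A where "A = {k. \<exists>i'\<in>N11 \<delta> n m v. asg s i' = Some k}"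
  have "finite (N11 \<delta> n m v)" by (rule finite_subset[of _ "{1..n}"]) (auto simp: N11_def N1_def)
  then have "card A + 1 \<le> card (N11 \<delta> n m v)"
    using card_Some_values_less[of "N11 \<delta> n m v" i "asg s"] i unfolding A_def agent_free_def by simp
  moreover have "A \<subseteq> {1..n}" using alg_invD(3)[OF I] unfolding A_def inv_assignment_def by blast
  moreover have "kc \<in> {1..n} - A" using kc by (auto simp: A_def bag_free_def)
  moreover have "val m v i (bag s k) \<le> 1 + 4*\<delta>/3" if "k \<in> A" "k \<in> {1..n}" for k
  proof (cases "bag s k = initbag n k")
    case True
    have "val m v i (initbag n k) \<le> 1" using i(1) that(2) unfolding N11_def N1_def by blast
    then show ?thesis using True \<open>0 \<le> \<delta>\<close> by simp
  next
    case False then show ?thesis using modified[OF that(2)] x by auto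
  qed
  moreover have "val m v i (bag s k) \<le> 3/4 + \<delta>" if "k \<in> {1..n} - A" for k
  proof (cases "bag_free s k")
    case True then show ?thesis using free_bag[of k] that by simp
  next
    case False
    then obtain i' where "asg s i' = Some k" by (auto simp: bag_free_def)
    moreover from this have "i' \<notin> N11 \<delta> n m v" using that by (auto simp: A_def)
    ultimately show ?thesis using alg_invD(8)[OF I] i by (force simp: inv_N11_first_def)
  qed
  ultimately show False
    using N11_counting_contradiction[OF sum \<open>A \<subseteq> {1..n}\<close>, of kc \<delta>] free_bag[OF kc] card \<open>0 \<le> \<delta>\<close> by fastforce
qed

lemma stuck_bag_values:
  assumes I: "alg_inv \<delta> n m v s" and p: "ph s = 2" and c: "cur s = Some kc"
    and unwanted: "\<not> someone_wants \<delta> n m v s kc" and i: "i \<in> {1..n}" "agent_free s i"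
  shows "kc \<in> {1..n}" "bag_free s kc"
    and "\<And>k. k \<in> {1..n} \<Longrightarrow> bag_free s k \<Longrightarrow> val m v i (bag s k) < 3/4 + \<delta>"
    and "\<And>k. k \<in> {1..n} \<Longrightarrow> bag s k \<noteq> initbag n k \<Longrightarrow>
      val m v i (bag s k) < 3/4 + \<delta> + val m v i {2*n+1}"
proof -
  show kc: "kc \<in> {1..n}" "bag_free s kc" using alg_invD(2)[OF I] c by (auto simp: inv_current_def)
  show "val m v i (bag s k) < 3/4 + \<delta> + val m v i {2*n+1}" if "k \<in> {1..n}" "bag s k \<noteq> initbag n k" for k
    using alg_invD(7)[OF I] i that by (simp add: inv_unwanted_def)
  show "val m v i (bag s k) < 3/4 + \<delta>" if "k \<in> {1..n}" "bag_free s k" for k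
  proof (cases "k = kc")
    case True then show ?thesis using unwanted i by (auto simp: someone_wants_def not_le)
  next
    case False
    then have "bag s k = initbag n k" using alg_invD(5)[OF I] that c by (auto simp: inv_modified_def)
    then show ?thesis using alg_invD(7)[OF I] i that p by (simp add: inv_unwanted_def)
  qed
qed

lemma stuck_state_contradiction:
  assumes d: "0 \<le> \<delta>" "\<delta> \<le> 0.011" and oni: "ONI \<delta> n m v"
    and card: "real (card (N11 \<delta> n m v)) \<le> real n * (1/4 - \<delta>) / (1/4 + \<delta>/3)"
    and I: "alg_inv \<delta> n m v s" and p: "ph s = 2" and c: "cur s = Some kc"
    and unwanted: "\<not> someone_wants \<delta> n m v s kc"
    and used: "\<forall>g\<in>{1..m}. g \<notin> {1..2*n} \<longrightarrow> g \<in> used n s"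
    and i: "i \<in> {1..n}" "agent_free s i"
  shows False
proof -
  let ?f = "\<lambda>k. val m v i (bag s k)" and ?x = "val m v i {2*n+1}"
  note bags = stuck_bag_values[OF I p c unwanted i]
  have sum: "(\<Sum>k\<in>{1..n}. ?f k) = n" using sum_bag_values[OF I used _ i(1)] oni by (simp add: ONI_def)
  have f_kc: "?f kc < 3/4 + \<delta>" using bags(1-3) by blast
  have x: "0 \<le> ?x" "?x < (3/4 + \<delta>) / 3" by (rule val_2n1_bounds[OF oni i(1)])+
  consider "i \<in> N11 \<delta> n m v" | "i \<in> N1 n m v" "i \<notin> N11 \<delta> n m v" | "i \<notin> N1 n m v" by blast
  then show False
  proof cases
    case 1
    then show False by (rule N11_agent_not_stuck[OF I d(1) card _ i(2) bags(1,2) sum]) (use bags x in auto)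
  next
    case 2
    have "?x < 1/4 - 5*\<delta>" using 2 i(1) by (auto simp: N11_def)
    then have "?f k \<le> 1" if "k \<in> {1..n}" for k
      using bags(4)[OF that] 2(1) that d(1) by (cases "bag s k = initbag n k") (auto simp: N1_def)
    moreover have "?f kc < 1" using f_kc d by simp
    ultimately have "(\<Sum>k\<in>{1..n}. ?f k) < (\<Sum>k\<in>{1..n}. 1)"
      using bags(1) by (intro sum_strict_mono_ex1) auto
    then show False using sum by simp
  next
    case 3
    let ?cap = "\<lambda>k. max (val m v i (initbag n k)) (3/4 + \<delta> + ?x)"
    have "?f k \<le> ?cap k" if "k \<in> {1..n}" for k
      using bags(4)[OF that] by (cases "bag s k = initbag n k") auto
    moreover have "?f kc < ?cap kc" using f_kc x(1) by (simp add: less_max_iff_disj)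
    ultimately have "(\<Sum>k\<in>{1..n}. ?f k) < (\<Sum>k\<in>{1..n}. ?cap k)"
      using bags(1) by (intro sum_strict_mono_ex1) auto
    then show False using sum N2_capped_sum_le[OF d oni i(1) 3] by simp
  qed
qed

lemma terminal_finished:
  assumes d: "0 \<le> \<delta>" "\<delta> \<le> 0.011" and oni: "ONI \<delta> n m v"
    and card: "real (card (N11 \<delta> n m v)) \<le> real n * (1/4 - \<delta>) / (1/4 + \<delta>/3)"
    and I: "alg_inv \<delta> n m v s" and terminal: "\<not> (\<exists>s'. step \<delta> n m v s s')"
  shows "finished n s"
proof -
  have p: "ph s = 2" by (rule terminal_phase2[OF I terminal])
  show ?thesis
  proof (cases "cur s")
    case None
    then have "\<forall>k\<in>{1..n}. \<not> bag_free s k" using terminal step.phase2_pick[OF p] by blast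
    then show ?thesis by (rule all_bags_taken_finished[OF I])
  next
    case (Some kc)
    have unwanted: "\<not> someone_wants \<delta> n m v s kc"
    proof
      assume "someone_wants \<delta> n m v s kc"
      then obtain i where "may_get \<delta> n m v s i kc" by (rule someone_wants_may_get)
      then show False using terminal step.phase2_assign[OF p Some] by blast
    qed
    have used: "\<forall>g\<in>{1..m}. g \<notin> {1..2*n} \<longrightarrow> g \<in> used n s"
    proof (intro ballI impI)
      fix g assume "g \<in> {1..m}" "g \<notin> {1..2*n}"
      then show "g \<in> used n s" using terminal step.phase2_add[OF p Some unwanted] by blast
    qed
    show ?thesis unfolding finished_def
    proof
      fix i assume "i \<in> {1..n}"
      show "asg s i \<noteq> None"
      proof
        assume "asg s i = None"
        then show False using stuck_state_contradiction[OF d oni card I p Some unwanted used \<open>i \<in> {1..n}\<close>]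
          by (simp add: agent_free_def)
      qed
    qed
  qed
qed

lemma finished_beta_MMS:
  assumes nz: "normalized n m v" and I: "alg_inv \<delta> n m v s" and fin: "finished n s"
  shows "beta_MMS n m v (3/4 + \<delta>) (alloc_out m s)"
proof -
  have inj: "\<And>i j k. asg s i = Some k \<Longrightarrow> asg s j = Some k \<Longrightarrow> i = j"
    and range: "\<And>i k. asg s i = Some k \<Longrightarrow> k \<in> {1..n}"
    using alg_invD(3)[OF I] unfolding inv_assignment_def by blast+
  have owner: "\<exists>k. asg s i = Some k \<and> alloc_out m s i = bag s k \<inter> {1..m}" if i: "i \<in> {1..n}" for i
  proof -
    obtain k where "asg s i = Some k" using fin i unfolding finished_def by blast
    then show ?thesis by (intro exI[of _ k]) (simp add: alloc_out_def)
  qed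
  have "alloc_out m s i \<inter> alloc_out m s j = {}" if ij: "i \<in> {1..n}" "j \<in> {1..n}" "i \<noteq> j" for i j
  proof -
    obtain ki where ki: "asg s i = Some ki" "alloc_out m s i = bag s ki \<inter> {1..m}"
      using owner[OF ij(1)] by blast
    obtain kj where kj: "asg s j = Some kj" "alloc_out m s j = bag s kj \<inter> {1..m}"
      using owner[OF ij(2)] by blast
    have "ki \<noteq> kj" using inj ki(1) kj(1) ij(3) by blast
    then have "bag s ki \<inter> bag s kj = {}"
      using alg_invD(4)[OF I] range[OF ki(1)] range[OF kj(1)] unfolding inv_bags_def by blast
    then show ?thesis using ki(2) kj(2) by blast
  qed
  moreover have "val m v i (alloc_out m s i) \<ge> (3/4 + \<delta>) * MMS m v i n {1..m}" if i: "i \<in> {1..n}" for i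
  proof -
    obtain k where "asg s i = Some k" "alloc_out m s i = bag s k \<inter> {1..m}" using owner[OF i] by blast
    then show ?thesis
      using alg_invD(6)[OF I] MMS_eq_1[OF nz i] val_Int_goods[of m v i "bag s k"]
      unfolding inv_assigned_value_def by simp
  qed
  moreover have "alloc_out m s i \<subseteq> {1..m}" for i by (auto simp: alloc_out_def split: option.splits)
  ultimately show ?thesis unfolding beta_MMS_def is_allocation_def by blast
qed

theorem theorem29:
  fixes \<delta> :: real and n m :: nat and v :: "nat \<Rightarrow> nat \<Rightarrow> real"
  assumes "0 \<le> \<delta>" and "\<delta> \<le> 0.011"
    and "ONI \<delta> n m v"
    and "real (card (N11 \<delta> n m v)) \<le> real n * (1/4 - \<delta>) / (1/4 + \<delta>/3)"
  shows "\<forall>s. (step \<delta> n m v)\<^sup>*\<^sup>* (init_st n) s \<and> \<not> (\<exists>s'. step \<delta> n m v s s') \<longrightarrow>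
           finished n s \<and> beta_MMS n m v (3/4 + \<delta>) (alloc_out m s)"
proof (intro allI impI, elim conjE)
  fix s assume reachable: "(step \<delta> n m v)\<^sup>*\<^sup>* (init_st n) s" and terminal: "\<not> (\<exists>s'. step \<delta> n m v s s')"
  have "ordered n m v" "normalized n m v" using assms(3) by (simp_all add: ONI_def)
  have I: "alg_inv \<delta> n m v s" by (rule alg_inv_reachable[OF reachable \<open>ordered n m v\<close>])
  have "finished n s" by (rule terminal_finished[OF assms I terminal])
  then show "finished n s \<and> beta_MMS n m v (3/4 + \<delta>) (alloc_out m s)"
    using finished_beta_MMS[OF \<open>normalized n m v\<close> I] by blast
qed

end
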